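(* Let $G$ be a complex Banach space and $T\in B(G)$ a scalar type spectral operator with spectrum $\sigma(T)$. Let $V$ be an open neighbourhood of $\sigma(T)$ in $\mathbb C$ and $l\in(0,+\infty]$ such that $]-l,l[\cdot V\subseteq V$, and let $F:V\to\mathbb C$ be analytic. Let $n,p\in\mathbb Z$, $n,p\ge1$, let $W\subseteq\mathbb R^n$ be open and $g\in\mathcal C^p(W,\mathbb R)$ with $g(W)\subseteq\,]-l,l[$. Define $\zeta^T_{F,g}:W\to B(G)$, $x\mapsto F_{g(x)}(T)$, where $F_t(\lambda):=F(t\lambda)$ for $\lambda\in V$, $t\in]-l,l[$, and $F_t(T)$ is given by the Borel functional calculus of $T$ (applied to $F_t\upharpoonright\sigma(T)$). Then $\zeta^T_{F,g}\in\mathcal C^p(W,B(G))$ (with respect to the norm topology of $B(G)$), and for every $i\in\{1,\dots,n\}$ $$\frac{\partial\zeta^T_{F,g}}{\partial e_i}=\frac{\partial g}{\partial e_i}\cdot T\,\zeta^T_{\frac{dF}{d\lambda},g},$$ where $\zeta^T_{\frac{dF}{d\lambda},g}(x)=\big(\tfrac{dF}{d\lambda}\big)_{g(x)}(T)$.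
   Context: A bounded scalar type spectral operator $T$ (Dunford–Schwartz Ch. XV) has a resolution of the identity $E$, a projection-valued measure on the Borel sets of $\mathbb C$, countably additive in the strong operator topology, supported on $\sigma(T)$, with $T=\int\lambda\,dE$; for a bounded Borel function $f$ on $\sigma(T)$, $f(T)=\int f\,dE\in B(G)$. $e_i$ is the $i$-th standard basis vector of $\mathbb R^n$. *)

theory Defs
  imports "HOL-Analysis.Analysis"
begin

class complex_normed_vector = real_normed_vector +
  fixes scaleC :: "complex \<Rightarrow> 'a \<Rightarrow> 'a" (infixr \<open>*\<^sub>C\<close> 75)
  assumes scaleC_of_real: "scaleC (complex_of_real r) x = r *\<^sub>R x"
    and scaleC_add_right: "scaleC a (x + y) = scaleC a x + scaleC a y"
    and scaleC_add_left: "scaleC (a + b) x = scaleC a x + scaleC b x"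
    and scaleC_scaleC: "scaleC a (scaleC b x) = scaleC (a * b) x"
    and scaleC_one: "scaleC 1 x = x"
    and norm_scaleC: "norm (scaleC a x) = cmod a * norm x"


text \<open>B(G) is rendered as the bounded (real-)linear operators G \<Rightarrow>L G that are
  in addition complex-linear.\<close>

definition complex_linear_op :: "('g::complex_normed_vector \<Rightarrow>\<^sub>L 'g) \<Rightarrow> bool" where
  "complex_linear_op L \<longleftrightarrow> (\<forall>c x. blinfun_apply L (c *\<^sub>C x) = c *\<^sub>C blinfun_apply L x)"

definition cscale_op :: "complex \<Rightarrow> ('g::complex_normed_vector \<Rightarrow>\<^sub>L 'g) \<Rightarrow> ('g \<Rightarrow>\<^sub>L 'g)" where
  "cscale_op c L = Blinfun (\<lambda>x. c *\<^sub>C blinfun_apply L x)"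

definition shift_op :: "complex \<Rightarrow> ('g::complex_normed_vector \<Rightarrow>\<^sub>L 'g) \<Rightarrow> ('g \<Rightarrow>\<^sub>L 'g)" where
  "shift_op w T = Blinfun (\<lambda>x. w *\<^sub>C x - blinfun_apply T x)"

definition op_spectrum :: "('g::complex_normed_vector \<Rightarrow>\<^sub>L 'g) \<Rightarrow> complex set" where
  "op_spectrum T = {w. \<not> (\<exists>S. S o\<^sub>L shift_op w T = id_blinfun \<and> shift_op w T o\<^sub>L S = id_blinfun)}"

definition spectral_measure :: "(complex set \<Rightarrow> ('g::complex_normed_vector \<Rightarrow>\<^sub>L 'g)) \<Rightarrow> bool" where
  "spectral_measure E \<longleftrightarrow>
     (\<forall>A \<in> sets borel. complex_linear_op (E A)) \<and>
     E {} = 0 \<and> E UNIV = id_blinfun \<and>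
     (\<forall>A \<in> sets borel. \<forall>B \<in> sets borel. E (A \<inter> B) = E A o\<^sub>L E B) \<and>
     (\<forall>A :: nat \<Rightarrow> complex set. range A \<subseteq> sets borel \<longrightarrow> disjoint_family A \<longrightarrow>
        (\<forall>x. (\<lambda>n. \<Sum>k<n. blinfun_apply (E (A k)) x) \<longlonglongrightarrow> blinfun_apply (E (\<Union>k. A k)) x))"

definition simple_borel :: "(complex \<Rightarrow> complex) \<Rightarrow> bool" where
  "simple_borel s \<longleftrightarrow> finite (range s) \<and> (\<forall>c. s -` {c} \<in> sets borel)"

definition simple_integral ::
  "(complex set \<Rightarrow> ('g::complex_normed_vector \<Rightarrow>\<^sub>L 'g)) \<Rightarrow> (complex \<Rightarrow> complex) \<Rightarrow> ('g \<Rightarrow>\<^sub>L 'g)" where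
  "simple_integral E s = (\<Sum>c\<in>range s. cscale_op c (E (s -` {c})))"

definition spectral_integral ::
  "(complex set \<Rightarrow> ('g::complex_normed_vector \<Rightarrow>\<^sub>L 'g)) \<Rightarrow> (complex \<Rightarrow> complex) \<Rightarrow> ('g \<Rightarrow>\<^sub>L 'g)" where
  "spectral_integral E f = (THE S. \<forall>s :: nat \<Rightarrow> complex \<Rightarrow> complex.
       (\<forall>k. simple_borel (s k)) \<longrightarrow> uniform_limit UNIV s f sequentially \<longrightarrow>
       (\<lambda>k. simple_integral E (s k)) \<longlonglongrightarrow> S)"

text \<open>f(T) for a function f given on \<sigma>(T) (extended by 0 off \<sigma>(T); E is supported on \<sigma>(T)).\<close>
definition fcalc ::
  "(complex set \<Rightarrow> ('g::complex_normed_vector \<Rightarrow>\<^sub>L 'g)) \<Rightarrow> ('g \<Rightarrow>\<^sub>L 'g) \<Rightarrow> (complex \<Rightarrow> complex) \<Rightarrow> ('g \<Rightarrow>\<^sub>L 'g)" where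
  "fcalc E T f = spectral_integral E (\<lambda>z. if z \<in> op_spectrum T then f z else 0)"

definition scalar_type_resolution ::
  "('g::complex_normed_vector \<Rightarrow>\<^sub>L 'g) \<Rightarrow> (complex set \<Rightarrow> ('g \<Rightarrow>\<^sub>L 'g)) \<Rightarrow> bool" where
  "scalar_type_resolution T E \<longleftrightarrow>
     complex_linear_op T \<and> spectral_measure E \<and>
     E (- op_spectrum T) = 0 \<and>
     (\<forall>A \<in> sets borel. E A o\<^sub>L T = T o\<^sub>L E A) \<and>
     T = fcalc E T (\<lambda>z. z)"

definition partial :: "'n::finite \<Rightarrow> (real^'n \<Rightarrow> 'b::real_normed_vector) \<Rightarrow> real^'n \<Rightarrow> 'b" where
  "partial i f x = vector_derivative (\<lambda>h. f (x + h *\<^sub>R axis i 1)) (at 0)"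

fun Cp :: "nat \<Rightarrow> (real^'n::finite) set \<Rightarrow> (real^'n \<Rightarrow> 'b::real_normed_vector) \<Rightarrow> bool" where
  "Cp 0 W f = continuous_on W f"
| "Cp (Suc k) W f = (continuous_on W f \<and>
      (\<forall>x\<in>W. \<forall>i. (\<lambda>h. f (x + h *\<^sub>R axis i 1)) differentiable (at 0)) \<and>
      (\<forall>i. Cp k W (partial i f)))"

end

theory Submission
  imports Defs "HOL-Complex_Analysis.Complex_Analysis"
begin

text \<open>Countable additivity of \<open>E\<close> in the strong operator topology forces \<open>E\<close> to be bounded
  (a Nikodym-type splitting argument followed by uniform boundedness), so integration against
  \<open>E\<close> is a bounded algebra homomorphism on bounded Borel functions, with
  \<open>\<parallel>\<integral>f dE\<parallel> \<le> 4 sup\<bar>f\<bar> sup\<^sub>A\<parallel>E(A)\<parallel>\<close>.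
  Hence \<open>F\<^sub>s(T) - F\<^sub>t(T) - (s - t) T (F')\<^sub>t(T)\<close> is the calculus applied to
  \<open>F(s\<lambda>) - F(t\<lambda>) - (s - t)\<lambda>F'(t\<lambda>)\<close>, which is \<open>o(\<bar>s - t\<bar>)\<close> uniformly on the compact
  spectrum because \<open>F'\<close> is uniformly continuous on a compact neighbourhood of \<open>t\<sigma>(T)\<close>.
  So \<open>s \<mapsto> F\<^sub>s(T)\<close> is norm-differentiable on \<open>]-l, l[\<close> with derivative \<open>T (F')\<^sub>s(T)\<close>;
  the chain rule gives the partial derivatives, and induction on \<open>p\<close>, applied to \<open>F'\<close>
  in place of \<open>F\<close>, gives \<open>C\<^sup>p\<close>.\<close>

lemma scaleC_scaleR_commute: "c *\<^sub>C (r *\<^sub>R (x::'a::complex_normed_vector)) = r *\<^sub>R (c *\<^sub>C x)"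
proof -
  have "c *\<^sub>C (r *\<^sub>R x) = c *\<^sub>C (complex_of_real r *\<^sub>C x)" by (simp add: scaleC_of_real)
  also have "\<dots> = complex_of_real r *\<^sub>C (c *\<^sub>C x)" by (simp add: scaleC_scaleC mult.commute)
  finally show ?thesis by (simp add: scaleC_of_real)
qed

lemma scaleC_zero_right [simp]: "c *\<^sub>C (0::'a::complex_normed_vector) = 0"
  using scaleC_add_right[of c "0::'a" 0] by simp

lemma scaleC_zero_left [simp]: "0 *\<^sub>C (x::'a::complex_normed_vector) = 0"
  using scaleC_of_real[of 0 x] by simp

lemma scaleC_diff_left: "(a - b) *\<^sub>C (x::'a::complex_normed_vector) = a *\<^sub>C x - b *\<^sub>C x"
  using scaleC_add_left[of "a - b" b x] by (simp add: algebra_simps)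

lemma scaleC_sum_right: "c *\<^sub>C (\<Sum>j\<in>J. f j) = (\<Sum>j\<in>J. c *\<^sub>C (f j::'a::complex_normed_vector))"
  by (induction J rule: infinite_finite_induct) (auto simp: scaleC_add_right)

lemma scaleC_eq_Re_Im: "c *\<^sub>C (x::'a::complex_normed_vector) = Re c *\<^sub>R x + Im c *\<^sub>R (\<i> *\<^sub>C x)"
proof -
  have "c = complex_of_real (Re c) + complex_of_real (Im c) * \<i>" by (simp add: complex_eq_iff)
  then have "c *\<^sub>C x = complex_of_real (Re c) *\<^sub>C x + complex_of_real (Im c) *\<^sub>C (\<i> *\<^sub>C x)"
    by (metis scaleC_add_left scaleC_scaleC)
  then show ?thesis by (simp add: scaleC_of_real)
qed

lemma bounded_linear_scaleC:
  assumes "bounded_linear f"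
  shows "bounded_linear (\<lambda>x. c *\<^sub>C (f x::'a::complex_normed_vector))"
proof -
  interpret f: bounded_linear f by fact
  obtain K where K: "\<And>x. norm (f x) \<le> norm x * K" using f.bounded by blast
  show ?thesis
  proof (rule bounded_linear_intro)
    show "c *\<^sub>C f (x + y) = c *\<^sub>C f x + c *\<^sub>C f y" for x y by (simp add: f.add scaleC_add_right)
    show "c *\<^sub>C f (r *\<^sub>R x) = r *\<^sub>R (c *\<^sub>C f x)" for r x by (simp add: f.scale scaleC_scaleR_commute)
    show "norm (c *\<^sub>C f x) \<le> norm x * (cmod c * K)" for x
      using mult_left_mono[OF K[of x], of "cmod c"] by (simp add: norm_scaleC mult_ac)
  qed
qed

lemma cscale_op_apply [simp]: "blinfun_apply (cscale_op c L) x = c *\<^sub>C blinfun_apply L x"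
  unfolding cscale_op_def
  by (subst bounded_linear_Blinfun_apply) (auto intro: bounded_linear_scaleC blinfun.bounded_linear_right)

lemma shift_op_apply [simp]: "blinfun_apply (shift_op w T) x = w *\<^sub>C x - blinfun_apply T x"
  unfolding shift_op_def
  by (subst bounded_linear_Blinfun_apply)
     (auto intro!: bounded_linear_sub bounded_linear_scaleC[of "\<lambda>x. x", simplified] bounded_linear_ident blinfun.bounded_linear_right)

lemma norm_cscale_op_le: "norm (cscale_op c L) \<le> cmod c * norm L"
proof (rule norm_blinfun_bound)
  fix x
  have "norm (blinfun_apply (cscale_op c L) x) = cmod c * norm (blinfun_apply L x)"
    by (simp add: norm_scaleC)
  also have "\<dots> \<le> cmod c * (norm L * norm x)" by (intro mult_left_mono norm_blinfun) auto
  finally show "norm (blinfun_apply (cscale_op c L) x) \<le> cmod c * norm L * norm x" by (simp add: mult_ac)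
qed simp

lemma norm_cscale_op_id_le: "norm (cscale_op c (id_blinfun :: 'a::complex_normed_vector \<Rightarrow>\<^sub>L 'a)) \<le> cmod c"
proof -
  have "norm (cscale_op c (id_blinfun :: 'a \<Rightarrow>\<^sub>L 'a)) \<le> cmod c * norm (id_blinfun :: 'a \<Rightarrow>\<^sub>L 'a)"
    by (rule norm_cscale_op_le)
  also have "\<dots> \<le> cmod c" by (intro mult_left_le norm_blinfun_id_le) simp
  finally show ?thesis .
qed

section \<open>Invertible operators and the spectrum\<close>

definition blinfun_invertible :: "('a::real_normed_vector \<Rightarrow>\<^sub>L 'a) \<Rightarrow> bool" where
  "blinfun_invertible A \<longleftrightarrow> (\<exists>S. S o\<^sub>L A = id_blinfun \<and> A o\<^sub>L S = id_blinfun)"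

lemma op_spectrum_iff: "w \<in> op_spectrum T \<longleftrightarrow> \<not> blinfun_invertible (shift_op w T)"
  by (simp add: op_spectrum_def blinfun_invertible_def)

definition blinfun_power :: "('a::real_normed_vector \<Rightarrow>\<^sub>L 'a) \<Rightarrow> nat \<Rightarrow> ('a \<Rightarrow>\<^sub>L 'a)" where
  "blinfun_power X n = ((\<lambda>Y. X o\<^sub>L Y) ^^ n) id_blinfun"

lemma blinfun_power_0 [simp]: "blinfun_power X 0 = id_blinfun"
  and blinfun_power_Suc: "blinfun_power X (Suc n) = X o\<^sub>L blinfun_power X n"
  by (simp_all add: blinfun_power_def)

lemma blinfun_power_Suc': "blinfun_power X (Suc n) = blinfun_power X n o\<^sub>L X"
proof (induction n)
  case 0 show ?case by (rule blinfun_eqI) (simp add: blinfun_power_Suc)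
next
  case (Suc n)
  have "blinfun_power X (Suc (Suc n)) = X o\<^sub>L (blinfun_power X n o\<^sub>L X)"
    using Suc by (simp add: blinfun_power_Suc)
  also have "\<dots> = (X o\<^sub>L blinfun_power X n) o\<^sub>L X" by (rule blinfun_eqI) simp
  finally show ?case by (simp add: blinfun_power_Suc)
qed

lemma norm_blinfun_power_le: "norm (blinfun_power X n) \<le> norm X ^ n"
proof (induction n)
  case 0 show ?case by (simp add: norm_blinfun_id_le)
next
  case (Suc n)
  have "norm (blinfun_power X (Suc n)) \<le> norm X * norm (blinfun_power X n)"
    unfolding blinfun_power_Suc by (rule norm_blinfun_compose)
  also have "\<dots> \<le> norm X * norm X ^ n" using Suc by (intro mult_left_mono) auto
  finally show ?case by simp
qed

lemma blinfun_invertible_id_minus: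
  fixes X :: "'a::banach \<Rightarrow>\<^sub>L 'a"
  assumes X: "norm X < 1"
  shows "blinfun_invertible (id_blinfun - X)"
proof -
  let ?P = "blinfun_power X"
  have geometric: "(\<lambda>n. norm X ^ n) \<longlonglongrightarrow> 0" using X by (intro LIMSEQ_power_zero) auto
  have "?P \<longlonglongrightarrow> 0"
    by (rule tendsto_norm_zero_cancel, rule Lim_null_comparison[OF _ geometric])
       (simp add: norm_blinfun_power_le)
  then have telescope: "(\<lambda>n. ?P n - ?P (Suc n)) sums id_blinfun"
    using telescope_sums' by fastforce
  have "summable ?P"
    by (rule summable_comparison_test[of _ "\<lambda>n. norm X ^ n"])
       (use norm_blinfun_power_le X in \<open>auto intro!: summable_geometric\<close>)
  then have sums: "?P sums suminf ?P" by (rule summable_sums)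
  have "(\<lambda>n. (id_blinfun - X) o\<^sub>L ?P n) sums ((id_blinfun - X) o\<^sub>L suminf ?P)"
    by (rule bounded_linear.sums[OF bounded_bilinear.bounded_linear_right[OF bounded_bilinear_blinfun_compose] sums])
  moreover have "(id_blinfun - X) o\<^sub>L ?P n = ?P n - ?P (Suc n)" for n
    by (rule blinfun_eqI) (simp add: blinfun_power_Suc blinfun.diff_left)
  ultimately have right: "(id_blinfun - X) o\<^sub>L suminf ?P = id_blinfun"
    using telescope sums_unique2 by auto
  have "(\<lambda>n. ?P n o\<^sub>L (id_blinfun - X)) sums (suminf ?P o\<^sub>L (id_blinfun - X))"
    by (rule bounded_linear.sums[OF bounded_bilinear.bounded_linear_left[OF bounded_bilinear_blinfun_compose] sums])
  moreover have "?P n o\<^sub>L (id_blinfun - X) = ?P n - ?P (Suc n)" for n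
    by (rule blinfun_eqI) (simp add: blinfun_power_Suc' blinfun.diff_left blinfun.diff_right)
  ultimately have left: "suminf ?P o\<^sub>L (id_blinfun - X) = id_blinfun"
    using telescope sums_unique2 by auto
  from left right show ?thesis unfolding blinfun_invertible_def by blast
qed

text \<open>If \<open>R\<close> inverts \<open>A\<close>, then \<open>A + B = A (I + R B)\<close> and \<open>(I + R B)\<^sup>-\<^sup>1 R\<close> inverts \<open>A + B\<close>.\<close>
lemma blinfun_invertible_add_small:
  fixes A B :: "'a::banach \<Rightarrow>\<^sub>L 'a"
  assumes R: "R o\<^sub>L A = id_blinfun" "A o\<^sub>L R = id_blinfun" and small: "norm R * norm B < 1"
  shows "blinfun_invertible (A + B)"
proof -
  have "norm (- (R o\<^sub>L B)) < 1"
    using norm_blinfun_compose[of R B] small by simp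
  then obtain S where S: "S o\<^sub>L (id_blinfun + (R o\<^sub>L B)) = id_blinfun" "(id_blinfun + (R o\<^sub>L B)) o\<^sub>L S = id_blinfun"
    using blinfun_invertible_id_minus unfolding blinfun_invertible_def by fastforce
  have R_apply: "blinfun_apply R (blinfun_apply A x) = x" "blinfun_apply A (blinfun_apply R x) = x" for x
    using arg_cong[OF R(1), of "\<lambda>L. blinfun_apply L x"] arg_cong[OF R(2), of "\<lambda>L. blinfun_apply L x"] by simp_all
  have S_apply: "blinfun_apply S (x + blinfun_apply R (blinfun_apply B x)) = x"
    "blinfun_apply S x + blinfun_apply R (blinfun_apply B (blinfun_apply S x)) = x" for x
    using arg_cong[OF S(1), of "\<lambda>L. blinfun_apply L x"] arg_cong[OF S(2), of "\<lambda>L. blinfun_apply L x"]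
    by (simp_all add: blinfun.add_left)
  have "blinfun_apply R (blinfun_apply (A + B) x) = x + blinfun_apply R (blinfun_apply B x)" for x
    by (simp add: blinfun.add_left blinfun.add_right R_apply)
  then have "(S o\<^sub>L R) o\<^sub>L (A + B) = id_blinfun"
    by (intro blinfun_eqI) (simp add: S_apply)
  moreover have "(A + B) o\<^sub>L (S o\<^sub>L R) = id_blinfun"
  proof (rule blinfun_eqI)
    fix x
    define y where "y = blinfun_apply S (blinfun_apply R x)"
    have "blinfun_apply A (y + blinfun_apply R (blinfun_apply B y)) = x"
      using S_apply(2)[of "blinfun_apply R x"] R_apply(2) by (simp add: y_def)
    then show "blinfun_apply ((A + B) o\<^sub>L (S o\<^sub>L R)) x = blinfun_apply id_blinfun x"
      by (simp add: y_def blinfun.add_left blinfun.add_right R_apply)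
  qed
  ultimately show ?thesis unfolding blinfun_invertible_def by blast
qed

lemma shift_op_eq: "shift_op w T = cscale_op w id_blinfun - T"
  by (rule blinfun_eqI) (simp add: blinfun.diff_left)

lemma op_spectrum_le_norm:
  fixes T :: "'g::{complex_normed_vector,banach} \<Rightarrow>\<^sub>L 'g"
  assumes "w \<in> op_spectrum T"
  shows "cmod w \<le> norm T"
proof (rule ccontr)
  assume w: "\<not> cmod w \<le> norm T"
  then have "w \<noteq> 0" using norm_ge_zero[of T] by auto
  then have inverse: "cscale_op (1 / w) id_blinfun o\<^sub>L cscale_op w id_blinfun = id_blinfun"
    "cscale_op w id_blinfun o\<^sub>L cscale_op (1 / w) id_blinfun = (id_blinfun :: 'g \<Rightarrow>\<^sub>L 'g)"
    by (auto intro!: blinfun_eqI simp: scaleC_scaleC scaleC_one)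
  have "norm (cscale_op (1 / w) (id_blinfun :: 'g \<Rightarrow>\<^sub>L 'g)) * norm (- T) \<le> (1 / cmod w) * norm T"
    unfolding norm_minus_cancel using norm_cscale_op_id_le[of "1 / w", where 'a='g]
    by (intro mult_right_mono) (auto simp: norm_divide)
  also have "\<dots> < 1" using w \<open>w \<noteq> 0\<close> by (simp add: field_simps)
  finally have "blinfun_invertible (cscale_op w id_blinfun + - T)"
    by (rule blinfun_invertible_add_small[OF inverse])
  then show False using assms by (simp add: op_spectrum_iff shift_op_eq)
qed

lemma open_op_resolvent:
  fixes T :: "'g::{complex_normed_vector,banach} \<Rightarrow>\<^sub>L 'g"
  shows "open (- op_spectrum T)"
  unfolding open_contains_ball
proof
  fix w assume "w \<in> - op_spectrum T"
  then obtain R where R: "R o\<^sub>L shift_op w T = id_blinfun" "shift_op w T o\<^sub>L R = id_blinfun"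
    by (auto simp: op_spectrum_iff blinfun_invertible_def)
  define r where "r = 1 / (norm R + 1)"
  have "r > 0" by (simp add: r_def add_nonneg_pos)
  moreover have "w' \<notin> op_spectrum T" if "w' \<in> ball w r" for w'
  proof -
    have "norm R * norm (cscale_op (w' - w) (id_blinfun :: 'g \<Rightarrow>\<^sub>L 'g)) \<le> norm R * cmod (w' - w)"
      using norm_cscale_op_id_le[of "w' - w", where 'a='g] by (intro mult_left_mono) auto
    also have "\<dots> \<le> cmod (w' - w) * (norm R + 1)" by (simp add: algebra_simps)
    also have "\<dots> < 1"
      using that \<open>r > 0\<close> by (simp add: r_def dist_norm norm_minus_commute pos_less_divide_eq add_nonneg_pos)
    finally have "blinfun_invertible (shift_op w T + cscale_op (w' - w) id_blinfun)"
      by (rule blinfun_invertible_add_small[OF R])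
    moreover have "shift_op w T + cscale_op (w' - w) id_blinfun = shift_op w' T"
      by (rule blinfun_eqI) (simp add: blinfun.add_left scaleC_diff_left)
    ultimately show ?thesis by (simp add: op_spectrum_iff)
  qed
  ultimately show "\<exists>r>0. ball w r \<subseteq> - op_spectrum T" by blast
qed

lemma compact_op_spectrum:
  fixes T :: "'g::{complex_normed_vector,banach} \<Rightarrow>\<^sub>L 'g"
  shows "compact (op_spectrum T)"
  unfolding compact_eq_bounded_closed closed_def
  using op_spectrum_le_norm open_op_resolvent bounded_iff by blast

section \<open>The uniform boundedness principle\<close>

lemma norm_blinfun_le_of_bounded_on_ball:
  fixes S :: "'a::real_normed_vector \<Rightarrow>\<^sub>L 'b::real_normed_vector"
  assumes r: "r > 0" and bounded: "\<And>y. y \<in> ball x0 r \<Longrightarrow> norm (blinfun_apply S y) \<le> M"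
  shows "norm S \<le> 4 * M / r"
proof (rule norm_blinfun_bound)
  have "0 \<le> M" using bounded[of x0] r by (meson centre_in_ball norm_ge_zero order_trans)
  then show "0 \<le> 4 * M / r" using r by simp
  fix y
  show "norm (blinfun_apply S y) \<le> 4 * M / r * norm y"
  proof (cases "y = 0")
    case True then show ?thesis by simp
  next
    case False
    define z where "z = x0 + ((r / 2) / norm y) *\<^sub>R y"
    have "z \<in> ball x0 r" using r False by (simp add: z_def dist_norm)
    then have bounds: "norm (blinfun_apply S z) \<le> M" "norm (blinfun_apply S x0) \<le> M"
      using bounded r by auto
    have "y = (2 * norm y / r) *\<^sub>R (z - x0)" using r False by (simp add: z_def)
    then have "blinfun_apply S y = (2 * norm y / r) *\<^sub>R (blinfun_apply S z - blinfun_apply S x0)"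
      by (metis blinfun.diff_right blinfun.scaleR_right)
    then have "norm (blinfun_apply S y) = (2 * norm y / r) * norm (blinfun_apply S z - blinfun_apply S x0)"
      using r by simp
    also have "\<dots> \<le> (2 * norm y / r) * (2 * M)"
      using bounds r by (intro mult_left_mono) (auto intro!: order.trans[OF norm_triangle_ineq4])
    finally show ?thesis by (simp add: field_simps)
  qed
qed

lemma uniform_boundedness:
  fixes S :: "'i \<Rightarrow> ('a::banach \<Rightarrow>\<^sub>L 'b::real_normed_vector)"
  assumes pointwise: "\<And>x. \<exists>M. \<forall>i\<in>I. norm (blinfun_apply (S i) x) \<le> M"
  shows "\<exists>M. \<forall>i\<in>I. norm (S i) \<le> M"
proof -
  define C where "C n = (\<Inter>i\<in>I. {x. norm (blinfun_apply (S i) x) \<le> real n})" for n :: nat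
  have closed: "closed (C n)" for n
    unfolding C_def by (intro closed_INT ballI closed_Collect_le continuous_intros)
  have cover: "(\<Union>n. C n) = UNIV"
  proof -
    have "\<exists>n. x \<in> C n" for x
    proof -
      obtain M where "\<forall>i\<in>I. norm (blinfun_apply (S i) x) \<le> M" using pointwise by blast
      moreover obtain n :: nat where "M \<le> real n" using real_arch_simple by blast
      ultimately show ?thesis unfolding C_def by (blast intro: order.trans)
    qed
    then show ?thesis by blast
  qed
  have "\<exists>n. interior (C n) \<noteq> {}"
  proof (rule ccontr)
    assume "\<not> ?thesis"
    then have "euclidean interior_of \<Union>(range C) = {}"
      by (intro Baire_category_alt)
         (auto simp: completely_metrizable_space_euclidean euclidean_interior_of closed_closedin[symmetric] closed)
    then show False by (simp add: euclidean_interior_of cover)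
  qed
  then obtain n x0 where "x0 \<in> interior (C n)" by blast
  then obtain r where r: "r > 0" "ball x0 r \<subseteq> C n"
    using mem_interior by blast
  have "norm (S i) \<le> 4 * real n / r" if "i \<in> I" for i
    using r that by (intro norm_blinfun_le_of_bounded_on_ball) (auto simp: C_def)
  then show ?thesis by blast
qed

section \<open>Projection-valued measures\<close>

locale projection_valued_measure =
  fixes E :: "complex set \<Rightarrow> ('g::{complex_normed_vector,banach} \<Rightarrow>\<^sub>L 'g)"
  assumes spectral_measure: "spectral_measure E"
begin

lemma E_scaleC: "A \<in> sets borel \<Longrightarrow> blinfun_apply (E A) (c *\<^sub>C x) = c *\<^sub>C blinfun_apply (E A) x"
  using spectral_measure unfolding spectral_measure_def complex_linear_op_def by blast

lemma E_empty [simp]: "E {} = 0"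
  using spectral_measure unfolding spectral_measure_def by blast

lemma E_Int_apply:
  "A \<in> sets borel \<Longrightarrow> B \<in> sets borel \<Longrightarrow>
    blinfun_apply (E A) (blinfun_apply (E B) x) = blinfun_apply (E (A \<inter> B)) x"
  using spectral_measure unfolding spectral_measure_def by simp

lemma E_countably_additive:
  "range A \<subseteq> sets borel \<Longrightarrow> disjoint_family A \<Longrightarrow>
    (\<lambda>n. \<Sum>k<n. blinfun_apply (E (A k)) x) \<longlonglongrightarrow> blinfun_apply (E (\<Union>k. A k)) x"
  using spectral_measure unfolding spectral_measure_def by blast

lemma E_disjoint_tendsto_0:
  assumes "range A \<subseteq> sets borel" "disjoint_family A"
  shows "(\<lambda>n. blinfun_apply (E (A n)) x) \<longlonglongrightarrow> 0"
proof -
  let ?s = "\<lambda>n. \<Sum>k<n. blinfun_apply (E (A k)) x"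
  have "(\<lambda>n. ?s (Suc n) - ?s n) \<longlonglongrightarrow> blinfun_apply (E (\<Union>k. A k)) x - blinfun_apply (E (\<Union>k. A k)) x"
    by (intro tendsto_diff LIMSEQ_Suc E_countably_additive assms)
  then show ?thesis by simp
qed

lemma E_Un_apply:
  assumes "A \<in> sets borel" "B \<in> sets borel" "A \<inter> B = {}"
  shows "blinfun_apply (E (A \<union> B)) x = blinfun_apply (E A) x + blinfun_apply (E B) x"
proof -
  define C where "C k = (if k = 0 then A else if k = 1 then B else {})" for k :: nat
  have "range C \<subseteq> sets borel" "disjoint_family C"
    using assms by (auto simp: C_def disjoint_family_on_def)
  then have "(\<lambda>n. \<Sum>k<n. blinfun_apply (E (C k)) x) \<longlonglongrightarrow> blinfun_apply (E (\<Union>k. C k)) x"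
    by (rule E_countably_additive)
  moreover have "(\<Union>k. C k) = A \<union> B"
    by (auto simp: C_def split: if_splits)
  moreover have "(\<Sum>k<n + 2. blinfun_apply (E (C k)) x) = blinfun_apply (E A) x + blinfun_apply (E B) x" for n
    by (induction n) (simp_all add: C_def numeral_2_eq_2)
  ultimately have "(\<lambda>n. blinfun_apply (E A) x + blinfun_apply (E B) x) \<longlonglongrightarrow> blinfun_apply (E (A \<union> B)) x"
    using LIMSEQ_ignore_initial_segment[of _ _ 2] by fastforce
  then show ?thesis by (simp add: LIMSEQ_const_iff)
qed

lemma E_Int_Diff_apply:
  assumes "A \<in> sets borel" "B \<in> sets borel"
  shows "blinfun_apply (E A) x = blinfun_apply (E (A \<inter> B)) x + blinfun_apply (E (A - B)) x"
  using E_Un_apply[of "A \<inter> B" "A - B" x] assms by (auto simp: Int_Diff_Un)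

lemma E_UN_apply:
  assumes "finite J" "\<And>j. j \<in> J \<Longrightarrow> A j \<in> sets borel" "disjoint_family_on A J"
  shows "blinfun_apply (E (\<Union>j\<in>J. A j)) x = (\<Sum>j\<in>J. blinfun_apply (E (A j)) x)"
  using assms
proof (induction J rule: finite_induct)
  case (insert j J)
  have "blinfun_apply (E (\<Union>i\<in>insert j J. A i)) x = blinfun_apply (E (A j \<union> (\<Union>i\<in>J. A i))) x" by simp
  also have "\<dots> = blinfun_apply (E (A j)) x + blinfun_apply (E (\<Union>i\<in>J. A i)) x"
    using insert by (intro E_Un_apply) (auto simp: disjoint_family_on_def)
  also have "\<dots> = blinfun_apply (E (A j)) x + (\<Sum>i\<in>J. blinfun_apply (E (A i)) x)"
    using insert by (simp add: disjoint_family_on_def)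
  finally show ?case using insert.hyps by simp
qed simp

definition E_unbounded_on :: "'g \<Rightarrow> complex set \<Rightarrow> bool" where
  "E_unbounded_on x A \<longleftrightarrow> A \<in> sets borel \<and> (\<forall>M. \<exists>B\<in>sets borel. B \<subseteq> A \<and> M < norm (blinfun_apply (E B) x))"

lemma E_unbounded_on_Int_or_Diff:
  assumes A: "E_unbounded_on x A" and C: "C \<in> sets borel"
  shows "E_unbounded_on x (A \<inter> C) \<or> E_unbounded_on x (A - C)"
proof (rule ccontr)
  have borel: "A \<inter> C \<in> sets borel" "A - C \<in> sets borel" using A C by (auto simp: E_unbounded_on_def)
  assume "\<not> ?thesis"
  then obtain M1 M2 where
    M1: "\<And>B. B \<in> sets borel \<Longrightarrow> B \<subseteq> A \<inter> C \<Longrightarrow> norm (blinfun_apply (E B) x) \<le> M1" and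
    M2: "\<And>B. B \<in> sets borel \<Longrightarrow> B \<subseteq> A - C \<Longrightarrow> norm (blinfun_apply (E B) x) \<le> M2"
    using borel unfolding E_unbounded_on_def by (meson not_le)
  obtain B where B: "B \<in> sets borel" "B \<subseteq> A" "M1 + M2 < norm (blinfun_apply (E B) x)"
    using A unfolding E_unbounded_on_def by blast
  have "norm (blinfun_apply (E B) x) \<le> norm (blinfun_apply (E (B \<inter> C)) x) + norm (blinfun_apply (E (B - C)) x)"
    unfolding E_Int_Diff_apply[OF B(1) C] by (rule norm_triangle_ineq)
  also have "\<dots> \<le> M1 + M2"
    using B C by (intro add_mono M1 M2) auto
  finally show False using B(3) by simp
qed

text \<open>Iterating this split produces disjoint sets \<open>A - A'\<close> with \<open>\<parallel>E(A - A') x\<parallel> \<ge> n\<close>,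
  contradicting countable additivity.\<close>
lemma E_unbounded_on_split:
  assumes A: "E_unbounded_on x A"
  shows "\<exists>A'. E_unbounded_on x A' \<and> A' \<subseteq> A \<and> real n \<le> norm (blinfun_apply (E (A - A')) x)"
proof -
  have A_borel: "A \<in> sets borel" using A by (simp add: E_unbounded_on_def)
  obtain C where C: "C \<in> sets borel" "C \<subseteq> A"
    "norm (blinfun_apply (E A) x) + n < norm (blinfun_apply (E C) x)"
    using A unfolding E_unbounded_on_def by blast
  have "blinfun_apply (E A) x = blinfun_apply (E C) x + blinfun_apply (E (A - C)) x"
    using E_Int_Diff_apply[OF A_borel C(1)] C(2) by (simp add: Int_absorb1)
  then have "norm (blinfun_apply (E C) x) - norm (blinfun_apply (E A) x) \<le> norm (blinfun_apply (E (A - C)) x)"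
    by (metis add_diff_cancel_left' norm_minus_commute norm_triangle_ineq2)
  then have big: "real n < norm (blinfun_apply (E (A - C)) x)" "real n < norm (blinfun_apply (E C) x)"
    using C(3) norm_ge_zero[of "blinfun_apply (E A) x"] by linarith+
  from E_unbounded_on_Int_or_Diff[OF A C(1)] show ?thesis
  proof
    assume "E_unbounded_on x (A \<inter> C)"
    then show ?thesis using C(2) big(1) by (intro exI[of _ C]) (auto simp: Int_absorb1)
  next
    assume "E_unbounded_on x (A - C)"
    moreover have "A - (A - C) = C" using C(2) by blast
    ultimately show ?thesis using big(2) by (intro exI[of _ "A - C"]) auto
  qed
qed

lemma E_apply_bounded: "\<exists>M. \<forall>A\<in>sets borel. norm (blinfun_apply (E A) x) \<le> M"
proof (rule ccontr)
  assume "\<not> ?thesis"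
  then have "E_unbounded_on x UNIV"
    using sets.top[of borel] unfolding E_unbounded_on_def by (auto simp: not_le)
  then have "\<exists>f. \<forall>n. E_unbounded_on x (f n) \<and>
      f (Suc n) \<subseteq> f n \<and> real n \<le> norm (blinfun_apply (E (f n - f (Suc n))) x)"
    by (intro dependent_nat_choice) (auto dest: E_unbounded_on_split)
  then obtain f where f: "\<And>n. E_unbounded_on x (f n)" "\<And>n. f (Suc n) \<subseteq> f n"
    "\<And>n. real n \<le> norm (blinfun_apply (E (f n - f (Suc n))) x)"
    by blast
  have "range (\<lambda>n. f n - f (Suc n)) \<subseteq> sets borel"
    using f(1) by (auto simp: E_unbounded_on_def)
  moreover have "disjoint_family (\<lambda>n. f n - f (Suc n))"
    using disjoint_family_Suc[of "\<lambda>n. - f n"] f(2) by (simp add: Diff_eq Int_commute)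
  ultimately have "(\<lambda>n. blinfun_apply (E (f n - f (Suc n))) x) \<longlonglongrightarrow> 0"
    by (rule E_disjoint_tendsto_0)
  then have "eventually (\<lambda>n. norm (blinfun_apply (E (f n - f (Suc n))) x) < 1) sequentially"
    by (metis tendsto_norm_zero_iff order_tendstoD(2) zero_less_one)
  then obtain N where "\<And>n. n \<ge> N \<Longrightarrow> norm (blinfun_apply (E (f n - f (Suc n))) x) < 1"
    by (auto simp: eventually_sequentially)
  from this[of "Suc N"] f(3)[of "Suc N"] show False by simp
qed

definition E_bound :: real where
  "E_bound = (SOME M. M > 0 \<and> (\<forall>A\<in>sets borel. norm (E A) \<le> M))"

lemma shows E_bound_pos: "E_bound > 0" and norm_E_le: "A \<in> sets borel \<Longrightarrow> norm (E A) \<le> E_bound"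
proof -
  obtain M where "\<forall>A\<in>sets borel. norm (E A) \<le> M"
    using uniform_boundedness[of "sets borel" E] E_apply_bounded by blast
  then have "\<exists>M. M > 0 \<and> (\<forall>A\<in>sets borel. norm (E A) \<le> M)"
    by (intro exI[of _ "max M 1"]) auto
  from someI_ex[OF this] show "E_bound > 0" "A \<in> sets borel \<Longrightarrow> norm (E A) \<le> E_bound"
    unfolding E_bound_def by auto
qed

lemma norm_E_apply_le: "A \<in> sets borel \<Longrightarrow> norm (blinfun_apply (E A) x) \<le> E_bound * norm x"
  using norm_blinfun[of "E A" x] norm_E_le[of A] by (meson mult_right_mono norm_ge_zero order_trans)

end

lemma norm_add_scaleR_le:
  fixes x y :: "'a::real_normed_vector"
  assumes a: "\<bar>a\<bar> \<le> 1" and plus: "norm (x + y) \<le> M" and minus: "norm (x - y) \<le> M"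
  shows "norm (x + a *\<^sub>R y) \<le> M"
proof -
  have "(a * 2) *\<^sub>R y = a *\<^sub>R y + a *\<^sub>R y"
    by (metis mult.commute scaleR_2 scaleR_scaleR)
  then have "2 *\<^sub>R (x + a *\<^sub>R y) = (1 + a) *\<^sub>R (x + y) + (1 - a) *\<^sub>R (x - y)"
    by (simp add: algebra_simps scaleR_2)
  then have "2 * norm (x + a *\<^sub>R y) = norm ((1 + a) *\<^sub>R (x + y) + (1 - a) *\<^sub>R (x - y))"
    by (metis norm_scaleR abs_numeral)
  also have "\<dots> \<le> (1 + a) * norm (x + y) + (1 - a) * norm (x - y)"
    using a by (intro order.trans[OF norm_triangle_ineq]) auto
  also have "\<dots> \<le> (1 + a) * M + (1 - a) * M"
    using a plus minus by (intro add_mono mult_left_mono) auto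
  finally show ?thesis by (simp add: algebra_simps)
qed

lemma simple_borel_iff_simple_function: "simple_borel s \<longleftrightarrow> simple_function borel s"
proof
  assume s: "simple_function borel s"
  have "s -` {c} \<in> sets borel" for c
  proof (cases "c \<in> range s")
    case True then show ?thesis using s by (auto simp: simple_function_def)
  next
    case False then have "s -` {c} = {}" by auto
    then show ?thesis by simp
  qed
  then show "simple_borel s" using s by (simp add: simple_borel_def simple_function_def)
qed (simp add: simple_borel_def simple_function_def)

lemma simple_borel_compose1: "simple_borel s \<Longrightarrow> simple_borel (\<lambda>z. h (s z))"
  by (simp add: simple_borel_iff_simple_function simple_function_compose1)

lemma simple_borel_compose2: "simple_borel s \<Longrightarrow> simple_borel t \<Longrightarrow> simple_borel (\<lambda>z. h (s z) (t z))"
  by (simp add: simple_borel_iff_simple_function simple_function_compose2)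

definition joint_level_set :: "('a \<Rightarrow> 'b) \<Rightarrow> ('a \<Rightarrow> 'c) \<Rightarrow> 'b \<times> 'c \<Rightarrow> 'a set" where
  "joint_level_set s t j = s -` {fst j} \<inter> t -` {snd j}"

context projection_valued_measure
begin

lemma simple_integral_apply:
  "blinfun_apply (simple_integral E s) x = (\<Sum>c\<in>range s. c *\<^sub>C blinfun_apply (E (s -` {c})) x)"
  by (simp add: simple_integral_def blinfun.sum_left)

lemma simple_integral_apply_partition:
  assumes s: "simple_borel s" and J: "finite J" and borel: "\<And>j. j \<in> J \<Longrightarrow> A j \<in> sets borel"
    and disjoint: "disjoint_family_on A J" and cover: "(\<Union>j\<in>J. A j) = UNIV"
    and const_on_blocks: "\<And>j z. j \<in> J \<Longrightarrow> z \<in> A j \<Longrightarrow> s z = v j"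
  shows "blinfun_apply (simple_integral E s) x = (\<Sum>j\<in>J. v j *\<^sub>C blinfun_apply (E (A j)) x)"
proof -
  define J' where "J' = {j\<in>J. A j \<noteq> {}}"
  have J': "J' \<subseteq> J" "finite J'" using J by (auto simp: J'_def)
  have level_set: "(\<Union>j\<in>{j\<in>J'. v j = c}. A j) = s -` {c}" for c
  proof
    show "(\<Union>j\<in>{j\<in>J'. v j = c}. A j) \<subseteq> s -` {c}" using const_on_blocks J' by auto
    show "s -` {c} \<subseteq> (\<Union>j\<in>{j\<in>J'. v j = c}. A j)"
    proof
      fix z assume z: "z \<in> s -` {c}"
      from cover obtain j where "j \<in> J" "z \<in> A j" by blast
      moreover from this have "v j = c" using const_on_blocks z by force
      ultimately show "z \<in> (\<Union>j\<in>{j\<in>J'. v j = c}. A j)" by (auto simp: J'_def)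
    qed
  qed
  have "(\<Sum>j\<in>J. v j *\<^sub>C blinfun_apply (E (A j)) x) = (\<Sum>j\<in>J'. v j *\<^sub>C blinfun_apply (E (A j)) x)"
    by (rule sum.mono_neutral_right[OF J J'(1)]) (auto simp: J'_def)
  also have "\<dots> = (\<Sum>c\<in>range s. \<Sum>j\<in>{j\<in>J'. v j = c}. v j *\<^sub>C blinfun_apply (E (A j)) x)"
  proof (rule sum.group[symmetric, OF J'(2)])
    show "finite (range s)" using s by (simp add: simple_borel_def)
    show "v ` J' \<subseteq> range s"
    proof
      fix c assume "c \<in> v ` J'"
      then obtain j z where "j \<in> J" "z \<in> A j" "c = v j" by (auto simp: J'_def)
      then show "c \<in> range s" using const_on_blocks by (metis rangeI)
    qed
  qed
  also have "\<dots> = (\<Sum>c\<in>range s. c *\<^sub>C blinfun_apply (E (\<Union>j\<in>{j\<in>J'. v j = c}. A j)) x)"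
  proof (rule sum.cong[OF refl])
    fix c
    have "(\<Sum>j\<in>{j\<in>J'. v j = c}. v j *\<^sub>C blinfun_apply (E (A j)) x)
        = c *\<^sub>C (\<Sum>j\<in>{j\<in>J'. v j = c}. blinfun_apply (E (A j)) x)"
      by (simp add: scaleC_sum_right)
    also have "\<dots> = c *\<^sub>C blinfun_apply (E (\<Union>j\<in>{j\<in>J'. v j = c}. A j)) x"
      using J' borel by (subst E_UN_apply) (auto intro: disjoint_family_on_mono[OF _ disjoint])
    finally show "(\<Sum>j\<in>{j\<in>J'. v j = c}. v j *\<^sub>C blinfun_apply (E (A j)) x)
        = c *\<^sub>C blinfun_apply (E (\<Union>j\<in>{j\<in>J'. v j = c}. A j)) x" .
  qed
  finally show ?thesis by (simp add: simple_integral_apply level_set)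
qed

lemma simple_integral_apply_compose1:
  assumes "simple_borel s"
  shows "blinfun_apply (simple_integral E (\<lambda>z. h (s z))) x
    = (\<Sum>c\<in>range s. h c *\<^sub>C blinfun_apply (E (s -` {c})) x)"
  using assms simple_borel_compose1[OF assms]
  by (intro simple_integral_apply_partition) (auto simp: simple_borel_def disjoint_family_on_def)

lemma simple_integral_apply_compose2:
  assumes s: "simple_borel s" and t: "simple_borel t"
  shows "blinfun_apply (simple_integral E (\<lambda>z. h (s z) (t z))) x
    = (\<Sum>j\<in>range s \<times> range t. h (fst j) (snd j) *\<^sub>C blinfun_apply (E (joint_level_set s t j)) x)"
  using s t simple_borel_compose2[OF s t]
  by (intro simple_integral_apply_partition)
     (auto simp: simple_borel_def disjoint_family_on_def joint_level_set_def)

lemma simple_integral_add: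
  assumes s: "simple_borel s" and t: "simple_borel t"
  shows "simple_integral E (\<lambda>z. s z + t z) = simple_integral E s + simple_integral E t"
  using simple_integral_apply_compose2[OF s t, of "\<lambda>a b. a + b"]
    simple_integral_apply_compose2[OF s t, of "\<lambda>a b. a"]
    simple_integral_apply_compose2[OF s t, of "\<lambda>a b. b"]
  by (intro blinfun_eqI) (simp add: blinfun.add_left scaleC_add_left sum.distrib)

lemma simple_integral_scaleR:
  assumes s: "simple_borel s"
  shows "simple_integral E (\<lambda>z. complex_of_real r * s z) = r *\<^sub>R simple_integral E s"
  using simple_integral_apply_compose1[OF s, of "\<lambda>a. complex_of_real r * a"]
    simple_integral_apply_compose1[OF s, of "\<lambda>a. a"]
  by (intro blinfun_eqI) (simp add: blinfun.scaleR_left scaleR_sum_right scaleC_of_real flip: scaleC_scaleC)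

lemma simple_integral_diff:
  assumes s: "simple_borel s" and t: "simple_borel t"
  shows "simple_integral E (\<lambda>z. s z - t z) = simple_integral E s - simple_integral E t"
proof -
  have "simple_integral E (\<lambda>z. s z - t z) = simple_integral E (\<lambda>z. s z + complex_of_real (- 1) * t z)"
    by simp
  also have "\<dots> = simple_integral E s + simple_integral E (\<lambda>z. complex_of_real (- 1) * t z)"
    by (rule simple_integral_add[OF s simple_borel_compose1[OF t]])
  also have "\<dots> = simple_integral E s - simple_integral E t"
    by (simp only: simple_integral_scaleR[OF t]) simp
  finally show ?thesis .
qed

lemma sum_E_apply_disjoint:
  assumes J: "finite J" "j \<in> J" and borel: "\<And>k. k \<in> J \<Longrightarrow> A k \<in> sets borel"
    and disjoint: "disjoint_family_on A J"
  shows "(\<Sum>k\<in>J. c k *\<^sub>C blinfun_apply (E (A j)) (blinfun_apply (E (A k)) x)) = c j *\<^sub>C blinfun_apply (E (A j)) x"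
proof -
  have disj: "A j \<inter> A k = {}" if "k \<in> J - {j}" for k
    using disjoint J that by (auto simp: disjoint_family_on_def)
  have "(\<Sum>k\<in>J - {j}. c k *\<^sub>C blinfun_apply (E (A j)) (blinfun_apply (E (A k)) x)) = 0"
    using J borel by (intro sum.neutral ballI) (simp add: E_Int_apply disj)
  then show ?thesis using J borel by (simp add: sum.remove E_Int_apply)
qed

lemma simple_integral_mult:
  assumes s: "simple_borel s" and t: "simple_borel t"
  shows "simple_integral E (\<lambda>z. s z * t z) = simple_integral E s o\<^sub>L simple_integral E t"
proof (rule blinfun_eqI)
  fix x
  let ?J = "range s \<times> range t" and ?A = "joint_level_set s t"
  have J: "finite ?J" using s t by (simp add: simple_borel_def)
  have borel: "?A j \<in> sets borel" for j
    using s t by (auto simp: simple_borel_def joint_level_set_def)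
  have "blinfun_apply (simple_integral E (\<lambda>z. s z * t z)) x = (\<Sum>j\<in>?J. (fst j * snd j) *\<^sub>C blinfun_apply (E (?A j)) x)"
    by (rule simple_integral_apply_compose2[OF s t])
  also have "\<dots> = (\<Sum>j\<in>?J. fst j *\<^sub>C (\<Sum>k\<in>?J. snd k *\<^sub>C blinfun_apply (E (?A j)) (blinfun_apply (E (?A k)) x)))"
  proof (rule sum.cong[OF refl])
    fix j assume "j \<in> ?J"
    moreover have "disjoint_family_on ?A ?J"
      by (auto simp: disjoint_family_on_def joint_level_set_def prod_eq_iff)
    ultimately show "(fst j * snd j) *\<^sub>C blinfun_apply (E (?A j)) x
        = fst j *\<^sub>C (\<Sum>k\<in>?J. snd k *\<^sub>C blinfun_apply (E (?A j)) (blinfun_apply (E (?A k)) x))"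
      using J borel by (simp add: sum_E_apply_disjoint scaleC_scaleC)
  qed
  also have "\<dots> = (\<Sum>j\<in>?J. fst j *\<^sub>C blinfun_apply (E (?A j)) (\<Sum>k\<in>?J. snd k *\<^sub>C blinfun_apply (E (?A k)) x))"
    using borel by (simp add: blinfun.sum_right E_scaleC)
  also have "\<dots> = blinfun_apply (simple_integral E s) (blinfun_apply (simple_integral E t) x)"
    using simple_integral_apply_compose2[OF s t, of "\<lambda>a b. a"] simple_integral_apply_compose2[OF s t, of "\<lambda>a b. b"]
    by simp
  finally show "blinfun_apply (simple_integral E (\<lambda>z. s z * t z)) x
      = blinfun_apply (simple_integral E s o\<^sub>L simple_integral E t) x"
    by simp
qed

text \<open>A sum with real coefficients in \<open>[-1, 1]\<close> is a convex combination of sums with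
  coefficients \<open>\<plusminus>1\<close>, i.e.\ of differences \<open>E P x - E N x\<close>; the induction moves the
  blocks one at a time into \<open>P\<close> or \<open>N\<close>.\<close>
lemma norm_signed_sum_E_apply_le:
  assumes "finite J"
  shows "\<lbrakk>\<forall>j\<in>J. A j \<in> sets borel; disjoint_family_on A J; P \<in> sets borel; N \<in> sets borel; P \<inter> N = {};
     \<forall>j\<in>J. A j \<inter> P = {} \<and> A j \<inter> N = {}; \<forall>j\<in>J. \<bar>a j\<bar> \<le> 1\<rbrakk> \<Longrightarrow>
     norm (blinfun_apply (E P) x - blinfun_apply (E N) x + (\<Sum>j\<in>J. a j *\<^sub>R blinfun_apply (E (A j)) x))
       \<le> 2 * E_bound * norm x"
  using assms
proof (induction J arbitrary: P N rule: finite_induct)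
  case empty
  have "norm (blinfun_apply (E P) x - blinfun_apply (E N) x) \<le> norm (blinfun_apply (E P) x) + norm (blinfun_apply (E N) x)"
    by (rule norm_triangle_ineq4)
  also have "\<dots> \<le> E_bound * norm x + E_bound * norm x"
    using empty by (intro add_mono norm_E_apply_le) auto
  finally show ?case by (simp add: mult_ac)
next
  case (insert k J)
  define X where "X = blinfun_apply (E P) x - blinfun_apply (E N) x + (\<Sum>j\<in>J. a j *\<^sub>R blinfun_apply (E (A j)) x)"
  define y where "y = blinfun_apply (E (A k)) x"
  have disjoint_J: "disjoint_family_on A J" using insert.prems(2) disjoint_family_on_mono by blast
  have Akj: "\<forall>j\<in>J. A j \<inter> A k = {}"
    using insert.prems(2) insert.hyps(2) unfolding disjoint_family_on_def by fastforce
  have Ak: "A k \<in> sets borel" "A k \<inter> P = {}" "A k \<inter> N = {}" "\<bar>a k\<bar> \<le> 1" using insert.prems by auto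
  have plus: "norm (X + y) \<le> 2 * E_bound * norm x"
  proof -
    have "blinfun_apply (E (P \<union> A k)) x = blinfun_apply (E P) x + y"
      unfolding y_def using Ak insert.prems by (intro E_Un_apply) auto
    moreover have "norm (blinfun_apply (E (P \<union> A k)) x - blinfun_apply (E N) x + (\<Sum>j\<in>J. a j *\<^sub>R blinfun_apply (E (A j)) x)) \<le> 2 * E_bound * norm x"
      using insert.prems Ak Akj disjoint_J by (intro insert.IH) blast+
    ultimately show ?thesis by (simp add: X_def algebra_simps)
  qed
  have minus: "norm (X - y) \<le> 2 * E_bound * norm x"
  proof -
    have "blinfun_apply (E (N \<union> A k)) x = blinfun_apply (E N) x + y"
      unfolding y_def using Ak insert.prems by (intro E_Un_apply) auto
    moreover have "norm (blinfun_apply (E P) x - blinfun_apply (E (N \<union> A k)) x + (\<Sum>j\<in>J. a j *\<^sub>R blinfun_apply (E (A j)) x)) \<le> 2 * E_bound * norm x"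
      using insert.prems Ak Akj disjoint_J by (intro insert.IH) blast+
    ultimately show ?thesis by (simp add: X_def algebra_simps)
  qed
  have "norm (X + a k *\<^sub>R y) \<le> 2 * E_bound * norm x"
    by (rule norm_add_scaleR_le[OF Ak(4) plus minus])
  moreover have "blinfun_apply (E P) x - blinfun_apply (E N) x + (\<Sum>j\<in>insert k J. a j *\<^sub>R blinfun_apply (E (A j)) x) = X + a k *\<^sub>R y"
    using insert.hyps by (simp add: X_def y_def algebra_simps)
  ultimately show ?case by simp
qed

lemma norm_sum_scaleR_E_apply_le:
  assumes "finite J" "\<forall>j\<in>J. A j \<in> sets borel" "disjoint_family_on A J" "\<forall>j\<in>J. \<bar>a j\<bar> \<le> 1"
  shows "norm (\<Sum>j\<in>J. a j *\<^sub>R blinfun_apply (E (A j)) x) \<le> 2 * E_bound * norm x"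
  using norm_signed_sum_E_apply_le[OF assms(1), of A "{}" "{}" a x] assms by simp

lemma norm_sum_scaleC_E_apply_le:
  assumes "finite J" "\<forall>j\<in>J. A j \<in> sets borel" "disjoint_family_on A J" "\<forall>j\<in>J. cmod (c j) \<le> 1"
  shows "norm (\<Sum>j\<in>J. c j *\<^sub>C blinfun_apply (E (A j)) x) \<le> 4 * E_bound * norm x"
proof -
  have "(\<Sum>j\<in>J. c j *\<^sub>C blinfun_apply (E (A j)) x)
      = (\<Sum>j\<in>J. Re (c j) *\<^sub>R blinfun_apply (E (A j)) x) + (\<Sum>j\<in>J. Im (c j) *\<^sub>R blinfun_apply (E (A j)) (\<i> *\<^sub>C x))"
  proof -
    have "c j *\<^sub>C blinfun_apply (E (A j)) x
        = Re (c j) *\<^sub>R blinfun_apply (E (A j)) x + Im (c j) *\<^sub>R blinfun_apply (E (A j)) (\<i> *\<^sub>C x)"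
      if "j \<in> J" for j
      using scaleC_eq_Re_Im[of "c j" "blinfun_apply (E (A j)) x"] E_scaleC[of "A j" \<i> x] assms(2) that by simp
    then show ?thesis by (simp add: sum.distrib[symmetric])
  qed
  also have "norm \<dots> \<le> 2 * E_bound * norm x + 2 * E_bound * norm (\<i> *\<^sub>C x)"
    using assms
    by (intro order.trans[OF norm_triangle_ineq] add_mono norm_sum_scaleR_E_apply_le)
       (auto intro: order_trans[OF abs_Re_le_cmod] order_trans[OF abs_Im_le_cmod])
  finally show ?thesis by (simp add: norm_scaleC mult_ac)
qed

lemma norm_simple_integral_le:
  assumes s: "simple_borel s" and B: "\<And>z. cmod (s z) \<le> B"
  shows "norm (simple_integral E s) \<le> 4 * E_bound * B"
proof (rule norm_blinfun_bound)
  have "0 \<le> B" using B[of 0] norm_ge_zero order_trans by blast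
  then show "0 \<le> 4 * E_bound * B" using E_bound_pos by simp
  fix x
  show "norm (blinfun_apply (simple_integral E s) x) \<le> 4 * E_bound * B * norm x"
  proof (cases "B = 0")
    case True
    then show ?thesis using B by (simp add: simple_integral_apply)
  next
    case False
    with \<open>0 \<le> B\<close> have "B > 0" by simp
    have "blinfun_apply (simple_integral E s) x
        = B *\<^sub>R (\<Sum>c\<in>range s. (c / complex_of_real B) *\<^sub>C blinfun_apply (E (s -` {c})) x)"
      using \<open>B > 0\<close>
      by (simp add: simple_integral_apply scaleC_sum_right scaleC_scaleC scaleC_of_real[symmetric])
    also have "norm \<dots> = B * norm (\<Sum>c\<in>range s. (c / complex_of_real B) *\<^sub>C blinfun_apply (E (s -` {c})) x)"
      using \<open>B > 0\<close> by simp
    also have "\<dots> \<le> B * (4 * E_bound * norm x)"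
      using s B \<open>B > 0\<close>
      by (intro mult_left_mono norm_sum_scaleC_E_apply_le)
         (auto simp: simple_borel_def disjoint_family_on_def norm_divide)
    finally show ?thesis by (simp add: mult_ac)
  qed
qed

end

section \<open>Integration of bounded Borel functions\<close>

definition bounded_borel :: "(complex \<Rightarrow> complex) \<Rightarrow> bool" where
  "bounded_borel f \<longleftrightarrow> f \<in> borel_measurable borel \<and> bounded (range f)"

lemma bounded_borel_scale: "bounded_borel f \<Longrightarrow> bounded_borel (\<lambda>z. c * f z)"
  unfolding bounded_borel_def
  using bounded_linear_image[OF _ bounded_linear_mult_right[of c], of "range f"] by (auto simp: image_image)

definition grid_round :: "nat \<Rightarrow> complex \<Rightarrow> complex" where
  "grid_round k w = complex_of_real (\<lfloor>real (Suc k) * Re w\<rfloor> / real (Suc k))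
     + \<i> * complex_of_real (\<lfloor>real (Suc k) * Im w\<rfloor> / real (Suc k))"

lemma borel_measurable_grid_round: "grid_round k \<in> borel_measurable borel"
  unfolding grid_round_def by measurable

lemma floor_mult_div_approx: "\<bar>\<lfloor>real (Suc k) * r\<rfloor> / real (Suc k) - r\<bar> < 1 / real (Suc k)"
proof -
  define n where "n = real (Suc k)"
  have n: "n > 0" by (simp add: n_def)
  have "\<bar>\<lfloor>n * r\<rfloor> - n * r\<bar> < 1" by linarith
  then have "\<bar>\<lfloor>n * r\<rfloor> - n * r\<bar> / n < 1 / n" using n by (simp add: divide_strict_right_mono)
  moreover have "\<lfloor>n * r\<rfloor> / n - r = (\<lfloor>n * r\<rfloor> - n * r) / n" using n by (simp add: field_simps)
  ultimately show ?thesis using n by (simp add: n_def)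
qed

lemma dist_grid_round: "dist (grid_round k w) w < 2 / real (Suc k)"
proof -
  have "dist (grid_round k w) w \<le> \<bar>Re (grid_round k w - w)\<bar> + \<bar>Im (grid_round k w - w)\<bar>"
    unfolding dist_norm by (rule cmod_le)
  also have "\<dots> = \<bar>\<lfloor>real (Suc k) * Re w\<rfloor> / real (Suc k) - Re w\<bar> + \<bar>\<lfloor>real (Suc k) * Im w\<rfloor> / real (Suc k) - Im w\<bar>"
    by (simp add: grid_round_def)
  also have "\<dots> < 1 / real (Suc k) + 1 / real (Suc k)"
    by (intro add_strict_mono floor_mult_div_approx)
  finally show ?thesis by simp
qed

lemma finite_grid_round_image:
  assumes "\<And>w. w \<in> S \<Longrightarrow> cmod w \<le> B"
  shows "finite (grid_round k ` S)"
proof -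
  define N where "N = \<lceil>real (Suc k) * B\<rceil> + 1"
  have floor_in: "\<lfloor>real (Suc k) * r\<rfloor> \<in> {-N..N}" if "\<bar>r\<bar> \<le> B" for r
  proof -
    define x where "x = real (Suc k) * r"
    define y where "y = real (Suc k) * B"
    have "\<bar>x\<bar> \<le> y" using that by (simp add: abs_mult x_def y_def)
    moreover have "\<lfloor>x\<rfloor> \<le> x" "x < \<lfloor>x\<rfloor> + 1" "y \<le> \<lceil>y\<rceil>" by linarith+
    ultimately have "\<lfloor>x\<rfloor> \<le> \<lceil>y\<rceil> + 1" "- (\<lceil>y\<rceil> + 1) \<le> \<lfloor>x\<rfloor>" by linarith+
    then show ?thesis unfolding N_def x_def y_def by simp
  qed
  have "grid_round k ` S \<subseteq> (\<lambda>(a, b). complex_of_real (a / real (Suc k)) + \<i> * complex_of_real (b / real (Suc k))) ` ({-N..N} \<times> {-N..N})"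
  proof
    fix v assume "v \<in> grid_round k ` S"
    then obtain w where w: "w \<in> S" "v = grid_round k w" by blast
    have "\<bar>Re w\<bar> \<le> B" "\<bar>Im w\<bar> \<le> B"
      using assms[OF w(1)] abs_Re_le_cmod abs_Im_le_cmod order_trans by blast+
    then show "v \<in> (\<lambda>(a, b). complex_of_real (a / real (Suc k)) + \<i> * complex_of_real (b / real (Suc k))) ` ({-N..N} \<times> {-N..N})"
      unfolding w(2) grid_round_def using floor_in
      by (intro image_eqI[of _ _ "(\<lfloor>real (Suc k) * Re w\<rfloor>, \<lfloor>real (Suc k) * Im w\<rfloor>)"]) auto
  qed
  then show ?thesis by (rule finite_subset) auto
qed

lemma bounded_borel_simple_approx:
  assumes f: "bounded_borel f"
  obtains s where "\<And>k. simple_borel (s k)" "uniform_limit UNIV s f sequentially"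
proof
  obtain B where B: "\<And>z. cmod (f z) \<le> B"
    using f unfolding bounded_borel_def bounded_iff by auto
  show "simple_borel (\<lambda>z. grid_round k (f z))" for k
  proof -
    have "(\<lambda>z. grid_round k (f z)) \<in> borel_measurable borel"
      using f borel_measurable_grid_round unfolding bounded_borel_def by (metis measurable_compose)
    moreover have "finite (range (\<lambda>z. grid_round k (f z)))"
      using finite_grid_round_image[of "range f" B k] B by (auto simp: image_image)
    ultimately show ?thesis
      by (simp add: simple_borel_iff_simple_function simple_function_borel_measurable)
  qed
  show "uniform_limit UNIV (\<lambda>k z. grid_round k (f z)) f sequentially"
  proof (rule uniform_limitI)
    fix e :: real assume e: "e > 0"
    obtain N :: nat where N: "2 / e < real N" using reals_Archimedean2 by blast
    have "dist (grid_round k (f z)) (f z) < e" if "k \<ge> N" for k z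
    proof -
      have "2 / e < real (Suc k)" using N that by simp
      then have "2 / real (Suc k) < e" using e by (simp add: field_simps)
      then show ?thesis using dist_grid_round[of k "f z"] by linarith
    qed
    then show "\<forall>\<^sub>F k in sequentially. \<forall>z\<in>UNIV. dist (grid_round k (f z)) (f z) < e"
      unfolding eventually_sequentially by blast
  qed
qed

context projection_valued_measure
begin

lemma norm_simple_integral_diff_le:
  assumes s: "simple_borel s" and t: "simple_borel t"
    and close: "\<And>z. dist (s z) (f z) < e" "\<And>z. dist (t z) (f z) < e"
  shows "norm (simple_integral E s - simple_integral E t) \<le> 8 * E_bound * e"
proof -
  have "cmod (s z - t z) \<le> 2 * e" for z
    using dist_triangle2[of "s z" "t z" "f z"] close[of z] by (simp add: dist_norm)
  then have "norm (simple_integral E (\<lambda>z. s z - t z)) \<le> 4 * E_bound * (2 * e)"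
    by (rule norm_simple_integral_le[OF simple_borel_compose2[OF s t]])
  then show ?thesis by (simp add: simple_integral_diff[OF s t])
qed

lemma simple_integral_approx_close:
  assumes s: "\<And>k. simple_borel (s k)" "uniform_limit UNIV s f sequentially"
    and t: "\<And>k. simple_borel (t k)" "uniform_limit UNIV t f sequentially"
    and r: "r > 0"
  shows "\<exists>N. \<forall>m\<ge>N. \<forall>n\<ge>N. norm (simple_integral E (s m) - simple_integral E (t n)) < r"
proof -
  define e where "e = r / (16 * E_bound)"
  have e: "e > 0" using r E_bound_pos by (simp add: e_def)
  obtain N1 N2 where N1: "\<And>m z. m \<ge> N1 \<Longrightarrow> dist (s m z) (f z) < e"
    and N2: "\<And>n z. n \<ge> N2 \<Longrightarrow> dist (t n z) (f z) < e"
    using uniform_limitD[OF s(2) e] uniform_limitD[OF t(2) e] unfolding eventually_sequentially by blast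
  have "norm (simple_integral E (s m) - simple_integral E (t n)) < r" if "m \<ge> max N1 N2" "n \<ge> max N1 N2" for m n
  proof -
    have "norm (simple_integral E (s m) - simple_integral E (t n)) \<le> 8 * E_bound * e"
      using that by (intro norm_simple_integral_diff_le[where f = f] s t N1 N2) auto
    also have "\<dots> < r" using r E_bound_pos by (simp add: e_def field_simps)
    finally show ?thesis .
  qed
  then show ?thesis by blast
qed

end

context projection_valued_measure
begin

lemma simple_integral_tendsto_spectral_integral:
  assumes s: "\<And>k. simple_borel (s k)" "uniform_limit UNIV s f sequentially"
  shows "(\<lambda>k. simple_integral E (s k)) \<longlonglongrightarrow> spectral_integral E f"
proof -
  have "Cauchy (\<lambda>k. simple_integral E (s k))"
    using simple_integral_approx_close[OF s s] by (intro CauchyI) blast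
  then obtain L where L: "(\<lambda>k. simple_integral E (s k)) \<longlonglongrightarrow> L"
    by (auto simp: Cauchy_convergent_iff convergent_def)
  have limit: "(\<lambda>k. simple_integral E (t k)) \<longlonglongrightarrow> L"
    if t: "\<And>k. simple_borel (t k)" "uniform_limit UNIV t f sequentially" for t
  proof -
    have "(\<lambda>k. simple_integral E (t k) - simple_integral E (s k)) \<longlonglongrightarrow> 0"
      using simple_integral_approx_close[OF t s] unfolding LIMSEQ_iff by fastforce
    from tendsto_add[OF L this] show ?thesis by simp
  qed
  have "spectral_integral E f = L"
    unfolding spectral_integral_def
  proof (rule the_equality)
    fix S assume "\<forall>t. (\<forall>k. simple_borel (t k)) \<longrightarrow> uniform_limit UNIV t f sequentially \<longrightarrow>
       (\<lambda>k. simple_integral E (t k)) \<longlonglongrightarrow> S"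
    then have "(\<lambda>k. simple_integral E (s k)) \<longlonglongrightarrow> S" using s by blast
    then show "S = L" using L LIMSEQ_unique by blast
  qed (use limit in blast)
  then show ?thesis using L by simp
qed

lemma spectral_integral_add:
  assumes f: "bounded_borel f" and g: "bounded_borel g"
  shows "spectral_integral E (\<lambda>z. f z + g z) = spectral_integral E f + spectral_integral E g"
proof -
  obtain s t where s: "\<And>k. simple_borel (s k)" "uniform_limit UNIV s f sequentially"
    and t: "\<And>k. simple_borel (t k)" "uniform_limit UNIV t g sequentially"
    using bounded_borel_simple_approx[OF f] bounded_borel_simple_approx[OF g] by metis
  have "(\<lambda>k. simple_integral E (s k) + simple_integral E (t k)) \<longlonglongrightarrow> spectral_integral E f + spectral_integral E g"
    by (intro tendsto_add simple_integral_tendsto_spectral_integral s t)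
  moreover have "(\<lambda>k. simple_integral E (s k) + simple_integral E (t k)) \<longlonglongrightarrow> spectral_integral E (\<lambda>z. f z + g z)"
    using simple_integral_tendsto_spectral_integral[of "\<lambda>k z. s k z + t k z"] s t
    by (simp add: simple_integral_add simple_borel_compose2 uniform_limit_add)
  ultimately show ?thesis using LIMSEQ_unique by metis
qed

lemma spectral_integral_scaleR:
  assumes f: "bounded_borel f"
  shows "spectral_integral E (\<lambda>z. complex_of_real r * f z) = r *\<^sub>R spectral_integral E f"
proof -
  obtain s where s: "\<And>k. simple_borel (s k)" "uniform_limit UNIV s f sequentially"
    using bounded_borel_simple_approx[OF f] by metis
  have "(\<lambda>k. r *\<^sub>R simple_integral E (s k)) \<longlonglongrightarrow> r *\<^sub>R spectral_integral E f"
    by (intro tendsto_scaleR tendsto_const simple_integral_tendsto_spectral_integral s)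
  moreover have "(\<lambda>k. r *\<^sub>R simple_integral E (s k)) \<longlonglongrightarrow> spectral_integral E (\<lambda>z. complex_of_real r * f z)"
    using simple_integral_tendsto_spectral_integral[of "\<lambda>k z. complex_of_real r * s k z"] s
    by (simp add: simple_integral_scaleR simple_borel_compose1 bounded_linear_uniform_limit_intros)
  ultimately show ?thesis using LIMSEQ_unique by metis
qed

lemma spectral_integral_diff:
  assumes f: "bounded_borel f" and g: "bounded_borel g"
  shows "spectral_integral E (\<lambda>z. f z - g z) = spectral_integral E f - spectral_integral E g"
proof -
  have "spectral_integral E (\<lambda>z. f z - g z) = spectral_integral E (\<lambda>z. f z + complex_of_real (- 1) * g z)"
    by simp
  also have "\<dots> = spectral_integral E f - spectral_integral E g"
    using f g by (simp only: spectral_integral_add spectral_integral_scaleR bounded_borel_scale) simp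
  finally show ?thesis .
qed

lemma spectral_integral_mult:
  assumes f: "bounded_borel f" and g: "bounded_borel g"
  shows "spectral_integral E (\<lambda>z. f z * g z) = spectral_integral E f o\<^sub>L spectral_integral E g"
proof -
  obtain s t where s: "\<And>k. simple_borel (s k)" "uniform_limit UNIV s f sequentially"
    and t: "\<And>k. simple_borel (t k)" "uniform_limit UNIV t g sequentially"
    using bounded_borel_simple_approx[OF f] bounded_borel_simple_approx[OF g] by metis
  have "uniform_limit UNIV (\<lambda>k z. s k z * t k z) (\<lambda>z. f z * g z) sequentially"
    using f g s t unfolding bounded_borel_def by (intro bounded_bilinear_bounded_uniform_limit_intros) auto
  then have "(\<lambda>k. simple_integral E (s k) o\<^sub>L simple_integral E (t k)) \<longlonglongrightarrow> spectral_integral E (\<lambda>z. f z * g z)"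
    using simple_integral_tendsto_spectral_integral[of "\<lambda>k z. s k z * t k z"] s t
    by (simp add: simple_integral_mult simple_borel_compose2)
  moreover have "(\<lambda>k. simple_integral E (s k) o\<^sub>L simple_integral E (t k)) \<longlonglongrightarrow> (spectral_integral E f o\<^sub>L spectral_integral E g)"
    by (intro bounded_bilinear.tendsto[OF bounded_bilinear_blinfun_compose] simple_integral_tendsto_spectral_integral s t)
  ultimately show ?thesis using LIMSEQ_unique by metis
qed

lemma norm_spectral_integral_le:
  assumes f: "bounded_borel f" and B: "\<And>z. cmod (f z) \<le> B"
  shows "norm (spectral_integral E f) \<le> 4 * E_bound * B"
proof (rule field_le_epsilon)
  fix e :: real assume e: "e > 0"
  define d where "d = e / (4 * E_bound)"
  have d: "d > 0" "4 * E_bound * (B + d) = 4 * E_bound * B + e"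
    using e E_bound_pos by (simp_all add: d_def field_simps)
  obtain s where s: "\<And>k. simple_borel (s k)" "uniform_limit UNIV s f sequentially"
    using bounded_borel_simple_approx[OF f] by metis
  have "\<forall>\<^sub>F k in sequentially. norm (simple_integral E (s k)) \<le> 4 * E_bound * (B + d)"
    using uniform_limitD[OF s(2) d(1)]
  proof (rule eventually_mono)
    fix k assume close: "\<forall>z\<in>UNIV. dist (s k z) (f z) < d"
    have "cmod (s k z) \<le> B + d" for z
      using norm_triangle_sub[of "s k z" "f z"] B[of z] close[rule_format, of z] by (simp add: dist_norm)
    then show "norm (simple_integral E (s k)) \<le> 4 * E_bound * (B + d)"
      by (rule norm_simple_integral_le[OF s(1)])
  qed
  then have "norm (spectral_integral E f) \<le> 4 * E_bound * (B + d)"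
    by (intro tendsto_upperbound[OF tendsto_norm[OF simple_integral_tendsto_spectral_integral[OF s]]]) auto
  then show "norm (spectral_integral E f) \<le> 4 * E_bound * B + e" using d(2) by simp
qed

end

lemma bounded_borel_restrict:
  assumes K: "compact K" and f: "continuous_on K f"
  shows "bounded_borel (\<lambda>z. if z \<in> K then f z else 0)"
  unfolding bounded_borel_def
proof
  show "(\<lambda>z. if z \<in> K then f z else 0) \<in> borel_measurable borel"
    using K f borel_closed[OF compact_imp_closed[OF K]]
    by (intro borel_measurable_continuous_on_if) (auto intro: continuous_on_const)
  have "range (\<lambda>z. if z \<in> K then f z else 0) \<subseteq> insert 0 (f ` K)" by auto
  moreover have "bounded (insert 0 (f ` K))"
    using compact_imp_bounded[OF compact_continuous_image[OF f K]] by simp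
  ultimately show "bounded (range (\<lambda>z. if z \<in> K then f z else 0))" by (rule bounded_subset[rotated])
qed

locale scalar_type_operator = projection_valued_measure E
  for E :: "complex set \<Rightarrow> ('g::{complex_normed_vector,banach} \<Rightarrow>\<^sub>L 'g)" +
  fixes T :: "'g \<Rightarrow>\<^sub>L 'g"
  assumes T_eq_fcalc: "T = fcalc E T (\<lambda>z. z)"
begin

lemma bounded_borel_restrict_op_spectrum:
  "continuous_on (op_spectrum T) f \<Longrightarrow> bounded_borel (\<lambda>z. if z \<in> op_spectrum T then f z else 0)"
  by (rule bounded_borel_restrict[OF compact_op_spectrum])

lemma fcalc_diff:
  assumes "continuous_on (op_spectrum T) f" "continuous_on (op_spectrum T) g"
  shows "fcalc E T (\<lambda>z. f z - g z) = fcalc E T f - fcalc E T g"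
proof -
  have "(\<lambda>z. if z \<in> op_spectrum T then f z - g z else 0)
      = (\<lambda>z. (if z \<in> op_spectrum T then f z else 0) - (if z \<in> op_spectrum T then g z else 0))"
    by auto
  then show ?thesis
    unfolding fcalc_def using assms by (simp add: spectral_integral_diff bounded_borel_restrict_op_spectrum)
qed

lemma fcalc_scaleR:
  assumes "continuous_on (op_spectrum T) f"
  shows "fcalc E T (\<lambda>z. complex_of_real r * f z) = r *\<^sub>R fcalc E T f"
proof -
  have "(\<lambda>z. if z \<in> op_spectrum T then complex_of_real r * f z else 0)
      = (\<lambda>z. complex_of_real r * (if z \<in> op_spectrum T then f z else 0))"
    by auto
  then show ?thesis
    unfolding fcalc_def using assms by (simp add: spectral_integral_scaleR bounded_borel_restrict_op_spectrum)
qed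

lemma fcalc_mult:
  assumes "continuous_on (op_spectrum T) f" "continuous_on (op_spectrum T) g"
  shows "fcalc E T (\<lambda>z. f z * g z) = fcalc E T f o\<^sub>L fcalc E T g"
proof -
  have "(\<lambda>z. if z \<in> op_spectrum T then f z * g z else 0)
      = (\<lambda>z. (if z \<in> op_spectrum T then f z else 0) * (if z \<in> op_spectrum T then g z else 0))"
    by auto
  then show ?thesis
    unfolding fcalc_def using assms by (simp add: spectral_integral_mult bounded_borel_restrict_op_spectrum)
qed

lemma norm_fcalc_le:
  assumes "continuous_on (op_spectrum T) f" "\<And>z. z \<in> op_spectrum T \<Longrightarrow> cmod (f z) \<le> B" "0 \<le> B"
  shows "norm (fcalc E T f) \<le> 4 * E_bound * B"
  unfolding fcalc_def using assms
  by (intro norm_spectral_integral_le bounded_borel_restrict_op_spectrum) auto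

end

section \<open>A uniform first-order estimate for holomorphic functions\<close>

lemma holomorphic_uniform_derivative_estimate:
  assumes L: "compact L" "L \<subseteq> V" and V: "open V" and F: "F holomorphic_on V" and e: "\<epsilon> > 0"
  obtains \<delta> where "\<delta> > 0"
    "\<And>w u. w \<in> L \<Longrightarrow> cmod u < \<delta> \<Longrightarrow> cmod (F (w + u) - F w - u * deriv F w) \<le> \<epsilon> * cmod u"
proof -
  obtain \<rho> where \<rho>: "\<rho> > 0" "(\<Union>w\<in>L. cball w \<rho>) \<subseteq> V"
    using compact_subset_open_imp_cball_epsilon_subset[OF L(1) V L(2)] by blast
  define L' where "L' = (\<Union>w\<in>L. cball w \<rho>)"
  have "continuous_on L' (deriv F)"
    using holomorphic_on_imp_continuous_on[OF holomorphic_deriv[OF F V]] \<rho>(2)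
    unfolding L'_def by (rule continuous_on_subset)
  then have "uniformly_continuous_on L' (deriv F)"
    unfolding L'_def by (intro compact_uniformly_continuous compact_minkowski_sum_cball L(1))
  then obtain \<eta> where \<eta>: "\<eta> > 0" "\<And>a b. a \<in> L' \<Longrightarrow> b \<in> L' \<Longrightarrow> dist b a < \<eta> \<Longrightarrow> dist (deriv F b) (deriv F a) < \<epsilon>"
    using e unfolding uniformly_continuous_on_def by metis
  show ?thesis
  proof
    show "min \<rho> \<eta> > 0" using \<rho> \<eta> by simp
    fix w u assume w: "w \<in> L" and u: "cmod u < min \<rho> \<eta>"
    define S where "S = ball w (min \<rho> \<eta>)"
    have "S \<subseteq> cball w \<rho>" "cball w \<rho> \<subseteq> L'" using w by (auto simp: S_def L'_def)
    then have S: "S \<subseteq> L'" "S \<subseteq> V" using \<rho>(2) by (auto simp: L'_def)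
    define G where "G v = F v - v * deriv F w" for v
    have "w \<in> S" "w + u \<in> S" using u \<rho> \<eta> by (auto simp: S_def dist_norm)
    have "(G has_field_derivative (deriv F v - deriv F w)) (at v within S)" if "v \<in> S" for v
      using holomorphic_derivI[OF F V, of v] that S unfolding G_def
      by (auto intro!: derivative_eq_intros)
    moreover have "norm (deriv F v - deriv F w) \<le> \<epsilon>" if "v \<in> S" for v
    proof -
      have "w \<in> L'" "v \<in> L'" "dist v w < \<eta>" using that S \<open>w \<in> S\<close> by (auto simp: S_def dist_commute)
      then show ?thesis using \<eta>(2)[of w v] by (simp add: dist_norm)
    qed
    ultimately have "norm (G (w + u) - G w) \<le> \<epsilon> * norm ((w + u) - w)"
      using \<open>w \<in> S\<close> \<open>w + u \<in> S\<close> by (intro field_differentiable_bound[of S]) (auto simp: S_def)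
    then show "cmod (F (w + u) - F w - u * deriv F w) \<le> \<epsilon> * cmod u"
      by (simp add: G_def algebra_simps)
  qed
qed

lemma holomorphic_scaled_derivative_estimate:
  fixes t :: real
  assumes K: "compact K" and V: "open V" and F: "F holomorphic_on V"
    and tK: "\<And>z. z \<in> K \<Longrightarrow> complex_of_real t * z \<in> V" and e: "\<epsilon> > 0"
  obtains \<delta> where "\<delta> > 0" "\<And>h z. \<bar>h\<bar> < \<delta> \<Longrightarrow> z \<in> K \<Longrightarrow>
     cmod (F (complex_of_real (t + h) * z) - F (complex_of_real t * z)
       - complex_of_real h * z * deriv F (complex_of_real t * z)) \<le> \<epsilon> * \<bar>h\<bar>"
proof -
  obtain R where R: "R > 0" "\<And>z. z \<in> K \<Longrightarrow> cmod z \<le> R"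
    using compact_imp_bounded[OF K] unfolding bounded_pos by blast
  have "compact ((\<lambda>z. complex_of_real t * z) ` K)"
    by (intro compact_continuous_image K continuous_intros)
  then obtain \<delta> where \<delta>: "\<delta> > 0" and estimate: "\<And>w u. w \<in> (\<lambda>z. complex_of_real t * z) ` K \<Longrightarrow> cmod u < \<delta> \<Longrightarrow>
      cmod (F (w + u) - F w - u * deriv F w) \<le> \<epsilon> / R * cmod u"
    using holomorphic_uniform_derivative_estimate[OF _ _ V F, of _ "\<epsilon> / R"] tK e R(1) by auto
  show ?thesis
  proof
    show "\<delta> / R > 0" using \<delta> R by simp
    fix h z assume h: "\<bar>h\<bar> < \<delta> / R" and z: "z \<in> K"
    have hz: "cmod (complex_of_real h * z) \<le> \<bar>h\<bar> * R"
      using R(2)[OF z] by (simp add: norm_mult mult_left_mono)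
    also have "\<dots> < \<delta>" using h R(1) by (simp add: field_simps)
    finally have "cmod (F (complex_of_real t * z + complex_of_real h * z) - F (complex_of_real t * z)
        - complex_of_real h * z * deriv F (complex_of_real t * z)) \<le> \<epsilon> / R * cmod (complex_of_real h * z)"
      using z by (intro estimate) auto
    also have "\<dots> \<le> \<epsilon> / R * (\<bar>h\<bar> * R)" using hz e R(1) by (intro mult_left_mono) auto
    finally show "cmod (F (complex_of_real (t + h) * z) - F (complex_of_real t * z)
        - complex_of_real h * z * deriv F (complex_of_real t * z)) \<le> \<epsilon> * \<bar>h\<bar>"
      using R(1) by (simp add: distrib_right)
  qed
qed

lemma continuous_on_dilation:
  "F holomorphic_on V \<Longrightarrow> (\<And>z. z \<in> K \<Longrightarrow> complex_of_real s * z \<in> V) \<Longrightarrow>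
    continuous_on K (\<lambda>z. F (complex_of_real s * z))"
  by (rule continuous_on_compose2[OF holomorphic_on_imp_continuous_on]) (auto intro!: continuous_intros)

context scalar_type_operator
begin

lemma fcalc_dilation_increment:
  assumes V: "open V" and F: "F holomorphic_on V"
    and y: "\<And>z. z \<in> op_spectrum T \<Longrightarrow> complex_of_real y * z \<in> V"
    and t: "\<And>z. z \<in> op_spectrum T \<Longrightarrow> complex_of_real t * z \<in> V"
  shows "fcalc E T (\<lambda>z. F (complex_of_real y * z)) - fcalc E T (\<lambda>z. F (complex_of_real t * z))
      - (y - t) *\<^sub>R (T o\<^sub>L fcalc E T (\<lambda>z. deriv F (complex_of_real t * z)))
    = fcalc E T (\<lambda>z. F (complex_of_real y * z) - F (complex_of_real t * z)
      - complex_of_real (y - t) * (z * deriv F (complex_of_real t * z)))"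
proof -
  have Fy: "continuous_on (op_spectrum T) (\<lambda>z. F (complex_of_real y * z))"
    and Ft: "continuous_on (op_spectrum T) (\<lambda>z. F (complex_of_real t * z))"
    and F't: "continuous_on (op_spectrum T) (\<lambda>z. deriv F (complex_of_real t * z))"
    using continuous_on_dilation[OF F] continuous_on_dilation[OF holomorphic_deriv[OF F V]] y t by auto
  have zF't: "continuous_on (op_spectrum T) (\<lambda>z. z * deriv F (complex_of_real t * z))"
    by (intro continuous_intros F't)
  have "fcalc E T (\<lambda>z. z * deriv F (complex_of_real t * z))
      = fcalc E T (\<lambda>z. z) o\<^sub>L fcalc E T (\<lambda>z. deriv F (complex_of_real t * z))"
    by (rule fcalc_mult[OF continuous_on_id F't])
  then have "(y - t) *\<^sub>R (T o\<^sub>L fcalc E T (\<lambda>z. deriv F (complex_of_real t * z)))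
      = fcalc E T (\<lambda>z. complex_of_real (y - t) * (z * deriv F (complex_of_real t * z)))"
    by (simp only: fcalc_scaleR[OF zF't] flip: T_eq_fcalc)
  then show ?thesis
    using Fy Ft zF't by (simp add: fcalc_diff continuous_intros)
qed

lemma norm_fcalc_dilation_remainder_le:
  assumes V: "open V" and F: "F holomorphic_on V"
    and y: "\<And>z. z \<in> op_spectrum T \<Longrightarrow> complex_of_real y * z \<in> V"
    and t: "\<And>z. z \<in> op_spectrum T \<Longrightarrow> complex_of_real t * z \<in> V"
    and bound: "\<And>z. z \<in> op_spectrum T \<Longrightarrow> cmod (F (complex_of_real y * z) - F (complex_of_real t * z)
      - complex_of_real (y - t) * z * deriv F (complex_of_real t * z)) \<le> B"
    and B: "0 \<le> B"
  shows "norm (fcalc E T (\<lambda>z. F (complex_of_real y * z)) - fcalc E T (\<lambda>z. F (complex_of_real t * z))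
      - (y - t) *\<^sub>R (T o\<^sub>L fcalc E T (\<lambda>z. deriv F (complex_of_real t * z)))) \<le> 4 * E_bound * B"
proof -
  have "norm (fcalc E T (\<lambda>z. F (complex_of_real y * z) - F (complex_of_real t * z)
      - complex_of_real (y - t) * (z * deriv F (complex_of_real t * z)))) \<le> 4 * E_bound * B"
  proof (rule norm_fcalc_le[OF _ _ B])
    show "continuous_on (op_spectrum T) (\<lambda>z. F (complex_of_real y * z) - F (complex_of_real t * z)
        - complex_of_real (y - t) * (z * deriv F (complex_of_real t * z)))"
      using continuous_on_dilation[OF F] continuous_on_dilation[OF holomorphic_deriv[OF F V]] y t
      by (intro continuous_intros) auto
  qed (use bound in \<open>simp add: mult.assoc\<close>)
  then show ?thesis by (simp only: fcalc_dilation_increment[OF V F y t])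
qed

lemma has_vector_derivative_fcalc_dilation:
  assumes V: "open V" and F: "F holomorphic_on V"
    and near: "\<forall>\<^sub>F s in nhds t. \<forall>z\<in>op_spectrum T. complex_of_real s * z \<in> V"
  shows "((\<lambda>s. fcalc E T (\<lambda>z. F (complex_of_real s * z))) has_vector_derivative
           (T o\<^sub>L fcalc E T (\<lambda>z. deriv F (complex_of_real t * z)))) (at t)"
  unfolding has_vector_derivative_def has_derivative_at_alt
proof (intro conjI allI impI bounded_linear_scaleR_left)
  obtain \<delta>0 where \<delta>0: "\<delta>0 > 0" "\<And>s z. dist s t < \<delta>0 \<Longrightarrow> z \<in> op_spectrum T \<Longrightarrow> complex_of_real s * z \<in> V"
    using near unfolding eventually_nhds_metric by blast
  fix e :: real assume e: "e > 0"
  define \<epsilon> where "\<epsilon> = e / (4 * E_bound)"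
  have \<epsilon>: "\<epsilon> > 0" using e E_bound_pos by (simp add: \<epsilon>_def)
  obtain \<delta>1 where \<delta>1: "\<delta>1 > 0" and estimate: "\<And>h z. \<bar>h\<bar> < \<delta>1 \<Longrightarrow> z \<in> op_spectrum T \<Longrightarrow>
     cmod (F (complex_of_real (t + h) * z) - F (complex_of_real t * z)
       - complex_of_real h * z * deriv F (complex_of_real t * z)) \<le> \<epsilon> * \<bar>h\<bar>"
    using holomorphic_scaled_derivative_estimate[OF compact_op_spectrum[of T] V F _ \<epsilon>, of t] \<delta>0 by auto
  have "norm (fcalc E T (\<lambda>z. F (complex_of_real y * z)) - fcalc E T (\<lambda>z. F (complex_of_real t * z))
      - (y - t) *\<^sub>R (T o\<^sub>L fcalc E T (\<lambda>z. deriv F (complex_of_real t * z)))) \<le> e * norm (y - t)"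
    if y: "norm (y - t) < min \<delta>0 \<delta>1" for y
  proof -
    have yV: "complex_of_real y * z \<in> V" and tV: "complex_of_real t * z \<in> V"
      if "z \<in> op_spectrum T" for z
      using \<delta>0 y that by (auto simp: dist_real_def)
    have "norm (fcalc E T (\<lambda>z. F (complex_of_real y * z)) - fcalc E T (\<lambda>z. F (complex_of_real t * z))
        - (y - t) *\<^sub>R (T o\<^sub>L fcalc E T (\<lambda>z. deriv F (complex_of_real t * z)))) \<le> 4 * E_bound * (\<epsilon> * \<bar>y - t\<bar>)"
      using estimate[of "y - t"] y \<epsilon> by (intro norm_fcalc_dilation_remainder_le[OF V F yV tV]) auto
    also have "\<dots> = e * norm (y - t)" using E_bound_pos by (simp add: \<epsilon>_def)
    finally show ?thesis .
  qed
  then show "\<exists>d>0. \<forall>y. norm (y - t) < d \<longrightarrow>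
      norm (fcalc E T (\<lambda>z. F (complex_of_real y * z)) - fcalc E T (\<lambda>z. F (complex_of_real t * z))
        - (y - t) *\<^sub>R (T o\<^sub>L fcalc E T (\<lambda>z. deriv F (complex_of_real t * z)))) \<le> e * norm (y - t)"
    using \<delta>0(1) \<delta>1 by (intro exI[of _ "min \<delta>0 \<delta>1"]) auto
qed

lemma has_vector_derivative_fcalc_dilation_interval:
  assumes V: "open V" "op_spectrum T \<subseteq> V" and F: "F holomorphic_on V"
    and l: "\<forall>t::real. ereal \<bar>t\<bar> < l \<longrightarrow> (\<forall>z\<in>V. complex_of_real t * z \<in> V)"
    and t: "ereal \<bar>t\<bar> < l"
  shows "((\<lambda>s. fcalc E T (\<lambda>z. F (complex_of_real s * z))) has_vector_derivative
           (T o\<^sub>L fcalc E T (\<lambda>z. deriv F (complex_of_real t * z)))) (at t)"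
proof (rule has_vector_derivative_fcalc_dilation[OF V(1) F])
  have "open {s::real. ereal \<bar>s\<bar> < l}"
    by (intro open_Collect_less continuous_intros)
  then show "\<forall>\<^sub>F s in nhds t. \<forall>z\<in>op_spectrum T. complex_of_real s * z \<in> V"
    using t l V(2) unfolding eventually_nhds by blast
qed

end

section \<open>Calculus of \<open>C\<^sup>p\<close> functions\<close>

lemma Cp_imp_continuous_on: "Cp k W f \<Longrightarrow> continuous_on W f"
  by (cases k) auto

lemma Cp_Suc_imp_Cp: "Cp (Suc k) W f \<Longrightarrow> Cp k W f"
proof (induction k arbitrary: f)
  case (Suc k) then show ?case by (simp del: Cp.simps(1))
qed simp

lemma has_vector_derivative_partial:
  "(\<lambda>h. f (x + h *\<^sub>R axis i 1)) differentiable (at 0) \<Longrightarrow>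
    ((\<lambda>h. f (x + h *\<^sub>R axis i 1)) has_vector_derivative partial i f x) (at 0)"
  unfolding partial_def vector_derivative_works .

lemma partial_eqI:
  "((\<lambda>h. f (x + h *\<^sub>R axis i 1)) has_vector_derivative D) (at 0) \<Longrightarrow> partial i f x = D"
  unfolding partial_def by (rule vector_derivative_at)

lemma has_vector_derivative_line_cong:
  fixes x :: "real^'n::finite"
  assumes W: "open W" "x \<in> W" and eq: "\<And>y. y \<in> W \<Longrightarrow> f y = g y"
    and f: "((\<lambda>h. f (x + h *\<^sub>R axis i 1)) has_vector_derivative D) (at 0)"
  shows "((\<lambda>h. g (x + h *\<^sub>R axis i 1)) has_vector_derivative D) (at 0)"
proof -
  have "open ((\<lambda>h::real. x + h *\<^sub>R axis i 1) -` W)"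
    by (intro open_vimage W continuous_intros)
  moreover have "(0::real) \<in> (\<lambda>h. x + h *\<^sub>R axis i 1) -` W" using W by simp
  ultimately have "\<forall>\<^sub>F h in nhds 0. h \<in> UNIV \<longrightarrow> f (x + h *\<^sub>R axis i 1) = g (x + h *\<^sub>R axis i 1)"
    unfolding eventually_nhds using eq by blast
  then have "((\<lambda>h. f (x + h *\<^sub>R axis i 1)) has_vector_derivative D) (at 0 within UNIV)
      = ((\<lambda>h. g (x + h *\<^sub>R axis i 1)) has_vector_derivative D) (at 0 within UNIV)"
    by (rule has_vector_derivative_cong_ev) (simp add: eq W)
  then show ?thesis using f by simp
qed

lemma Cp_cong:
  fixes f g :: "real^'n::finite \<Rightarrow> 'b::real_normed_vector"
  assumes "open W"
  shows "Cp k W f \<Longrightarrow> (\<And>x. x \<in> W \<Longrightarrow> f x = g x) \<Longrightarrow> Cp k W g"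
proof (induction k arbitrary: f g)
  case 0 then show ?case using continuous_on_cong by force
next
  case (Suc k)
  have line_g: "((\<lambda>h. g (x + h *\<^sub>R axis i 1)) has_vector_derivative partial i f x) (at 0)" if "x \<in> W" for x i
  proof (rule has_vector_derivative_line_cong[OF assms that])
    show "((\<lambda>h. f (x + h *\<^sub>R axis i 1)) has_vector_derivative partial i f x) (at 0)"
      using Suc.prems that by (intro has_vector_derivative_partial) auto
  qed (use Suc.prems in auto)
  have "Cp k W (partial i g)" for i
  proof (rule Suc.IH)
    show "Cp k W (partial i f)" using Suc.prems(1) by simp
  qed (simp add: partial_eqI[OF line_g])
  moreover have "continuous_on W g" using Suc.prems continuous_on_cong by force
  moreover have "(\<lambda>h. g (x + h *\<^sub>R axis i 1)) differentiable (at 0)" if "x \<in> W" for x i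
    using line_g[OF that] by (rule differentiableI_vector)
  ultimately show ?case by simp
qed

lemma Cp_SucI:
  assumes W: "open W" and f: "continuous_on W f"
    and line: "\<And>x i. x \<in> W \<Longrightarrow> ((\<lambda>h. f (x + h *\<^sub>R axis i 1)) has_vector_derivative D i x) (at 0)"
    and D: "\<And>i. Cp k W (D i)"
  shows "Cp (Suc k) W f"
proof -
  have "Cp k W (partial i f)" for i
    using D by (rule Cp_cong[OF W]) (simp add: partial_eqI[OF line])
  moreover have "(\<lambda>h. f (x + h *\<^sub>R axis i 1)) differentiable (at 0)" if "x \<in> W" for x i
    using line[OF that] by (rule differentiableI_vector)
  ultimately show ?thesis using f by simp
qed

lemma Cp_add:
  fixes f g :: "real^'n::finite \<Rightarrow> 'b::real_normed_vector"
  assumes W: "open W"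
  shows "Cp k W f \<Longrightarrow> Cp k W g \<Longrightarrow> Cp k W (\<lambda>x. f x + g x)"
proof (induction k arbitrary: f g)
  case 0 then show ?case by (auto intro: continuous_on_add)
next
  case (Suc k)
  show ?case
  proof (rule Cp_SucI[OF W])
    show "continuous_on W (\<lambda>x. f x + g x)"
      using Suc.prems by (intro continuous_on_add Cp_imp_continuous_on)
    show "((\<lambda>h. f (x + h *\<^sub>R axis i 1) + g (x + h *\<^sub>R axis i 1)) has_vector_derivative
        partial i f x + partial i g x) (at 0)" if "x \<in> W" for x i
      using Suc.prems that by (intro has_vector_derivative_add has_vector_derivative_partial) auto
    show "Cp k W (\<lambda>x. partial i f x + partial i g x)" for i
      using Suc.prems by (intro Suc.IH) auto
  qed
qed

lemma Cp_bounded_linear: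
  fixes f :: "real^'n::finite \<Rightarrow> 'b::real_normed_vector" and L :: "'b \<Rightarrow> 'c::real_normed_vector"
  assumes W: "open W" and L: "bounded_linear L"
  shows "Cp k W f \<Longrightarrow> Cp k W (\<lambda>x. L (f x))"
proof (induction k arbitrary: f)
  case 0 then show ?case using L by (auto intro: bounded_linear.continuous_on)
next
  case (Suc k)
  show ?case
  proof (rule Cp_SucI[OF W])
    show "continuous_on W (\<lambda>x. L (f x))"
      using Suc.prems L by (auto intro: bounded_linear.continuous_on Cp_imp_continuous_on)
    show "((\<lambda>h. L (f (x + h *\<^sub>R axis i 1))) has_vector_derivative L (partial i f x)) (at 0)"
      if "x \<in> W" for x i
      using Suc.prems that by (intro bounded_linear.has_vector_derivative[OF L] has_vector_derivative_partial) auto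
    show "Cp k W (\<lambda>x. L (partial i f x))" for i
      using Suc.prems by (intro Suc.IH) auto
  qed
qed

lemma Cp_scaleR:
  fixes a :: "real^'n::finite \<Rightarrow> real" and b :: "real^'n \<Rightarrow> 'b::real_normed_vector"
  assumes W: "open W"
  shows "Cp k W a \<Longrightarrow> Cp k W b \<Longrightarrow> Cp k W (\<lambda>x. a x *\<^sub>R b x)"
proof (induction k arbitrary: a b)
  case 0 then show ?case by (auto intro: continuous_on_scaleR)
next
  case (Suc k)
  show ?case
  proof (rule Cp_SucI[OF W])
    show "continuous_on W (\<lambda>x. a x *\<^sub>R b x)"
      using Suc.prems by (intro continuous_on_scaleR Cp_imp_continuous_on)
    show "((\<lambda>h. a (x + h *\<^sub>R axis i 1) *\<^sub>R b (x + h *\<^sub>R axis i 1)) has_vector_derivative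
        a x *\<^sub>R partial i b x + partial i a x *\<^sub>R b x) (at 0)" if "x \<in> W" for x i
    proof -
      have "((\<lambda>h. a (x + h *\<^sub>R axis i 1)) has_real_derivative partial i a x) (at 0)"
        using Suc.prems that has_vector_derivative_partial[of a x i]
        by (simp add: has_real_derivative_iff_has_vector_derivative)
      moreover have "((\<lambda>h. b (x + h *\<^sub>R axis i 1)) has_vector_derivative partial i b x) (at 0)"
        using Suc.prems that by (intro has_vector_derivative_partial) auto
      ultimately show ?thesis using has_vector_derivative_scaleR by fastforce
    qed
    have "Cp k W a" "Cp k W b" using Suc.prems by (auto intro: Cp_Suc_imp_Cp)
    then show "Cp k W (\<lambda>x. a x *\<^sub>R partial i b x + partial i a x *\<^sub>R b x)" for i
      using Suc.prems by (intro Cp_add[OF W] Suc.IH) auto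
  qed
qed

context scalar_type_operator
begin

lemma has_vector_derivative_line_fcalc_dilation:
  assumes V: "open V" "op_spectrum T \<subseteq> V" and F: "F holomorphic_on V"
    and l: "\<forall>t::real. ereal \<bar>t\<bar> < l \<longrightarrow> (\<forall>z\<in>V. complex_of_real t * z \<in> V)"
    and gx: "ereal \<bar>g x\<bar> < l" and g: "(\<lambda>h. g (x + h *\<^sub>R axis i 1)) differentiable (at 0)"
  shows "((\<lambda>h. fcalc E T (\<lambda>z. F (complex_of_real (g (x + h *\<^sub>R axis i 1)) * z))) has_vector_derivative
          partial i g x *\<^sub>R (T o\<^sub>L fcalc E T (\<lambda>z. deriv F (complex_of_real (g x) * z)))) (at 0)"
  using vector_diff_chain_at[OF has_vector_derivative_partial[OF g]
      has_vector_derivative_fcalc_dilation_interval[OF V F l]] gx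
  by (simp add: o_def)

lemma Cp_fcalc_dilation:
  assumes V: "open V" "op_spectrum T \<subseteq> V"
    and l: "\<forall>t::real. ereal \<bar>t\<bar> < l \<longrightarrow> (\<forall>z\<in>V. complex_of_real t * z \<in> V)"
    and W: "open W"
  shows "F holomorphic_on V \<Longrightarrow> Cp k W g \<Longrightarrow> (\<And>x. x \<in> W \<Longrightarrow> ereal \<bar>g x\<bar> < l) \<Longrightarrow>
    Cp k W (\<lambda>x. fcalc E T (\<lambda>z. F (complex_of_real (g x) * z)))"
proof (induction k arbitrary: F g)
  have continuous: "continuous_on W (\<lambda>x. fcalc E T (\<lambda>z. F (complex_of_real (g x) * z)))"
    if F: "F holomorphic_on V" and g: "continuous_on W g" and gl: "\<And>x. x \<in> W \<Longrightarrow> ereal \<bar>g x\<bar> < l" for F g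
  proof (rule continuous_on_compose2[OF _ g])
    show "continuous_on {t. ereal \<bar>t\<bar> < l} (\<lambda>s. fcalc E T (\<lambda>z. F (complex_of_real s * z)))"
      using has_vector_derivative_fcalc_dilation_interval[OF V F l] has_vector_derivative_continuous
      by (blast intro: continuous_at_imp_continuous_on)
  qed (use gl in auto)
  {
    case 0
    then show ?case using continuous by simp
  next
    case (Suc k)
    show ?case
    proof (rule Cp_SucI[OF W])
      show "continuous_on W (\<lambda>x. fcalc E T (\<lambda>z. F (complex_of_real (g x) * z)))"
        using Suc.prems by (intro continuous) auto
      show "((\<lambda>h. fcalc E T (\<lambda>z. F (complex_of_real (g (x + h *\<^sub>R axis i 1)) * z))) has_vector_derivative
          partial i g x *\<^sub>R (T o\<^sub>L fcalc E T (\<lambda>z. deriv F (complex_of_real (g x) * z)))) (at 0)"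
        if "x \<in> W" for x i
        using Suc.prems that by (intro has_vector_derivative_line_fcalc_dilation[OF V _ l]) auto
      have "Cp k W (\<lambda>x. fcalc E T (\<lambda>z. deriv F (complex_of_real (g x) * z)))"
        using Suc.IH holomorphic_deriv[OF _ V(1)] Cp_Suc_imp_Cp Suc.prems by blast
      then show "Cp k W (\<lambda>x. partial i g x *\<^sub>R (T o\<^sub>L fcalc E T (\<lambda>z. deriv F (complex_of_real (g x) * z))))" for i
        using Suc.prems(2)
        by (intro Cp_scaleR[OF W] Cp_bounded_linear[OF W bounded_bilinear.bounded_linear_right[OF bounded_bilinear_blinfun_compose]]) auto
    qed
  }
qed

end

theorem mainTheorem3:
  fixes T :: "'g::{complex_normed_vector,banach} \<Rightarrow>\<^sub>L 'g"
    and E :: "complex set \<Rightarrow> ('g \<Rightarrow>\<^sub>L 'g)"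
    and V :: "complex set" and l :: ereal and F :: "complex \<Rightarrow> complex"
    and p :: nat and W :: "(real^'n::finite) set" and g :: "real^'n \<Rightarrow> real"
  assumes T: "scalar_type_resolution T E"
    and V: "open V" "op_spectrum T \<subseteq> V"
    and l: "l > 0" "\<forall>t::real. ereal \<bar>t\<bar> < l \<longrightarrow> (\<forall>z\<in>V. complex_of_real t * z \<in> V)"
    and F: "F analytic_on V"
    and p: "p \<ge> 1"
    and W: "open W"
    and g: "Cp p W g" "\<forall>x\<in>W. ereal \<bar>g x\<bar> < l"
  shows "Cp p W (\<lambda>x. fcalc E T (\<lambda>z. F (complex_of_real (g x) * z)))
       \<and> (\<forall>i. \<forall>x\<in>W. partial i (\<lambda>x. fcalc E T (\<lambda>z. F (complex_of_real (g x) * z))) x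
              = partial i g x *\<^sub>R (T o\<^sub>L fcalc E T (\<lambda>z. deriv F (complex_of_real (g x) * z))))"
proof -
  interpret scalar_type_operator E T
    using T unfolding scalar_type_resolution_def by unfold_locales auto
  have F: "F holomorphic_on V" using F analytic_on_open[OF V(1)] by blast
  obtain q where q: "p = Suc q" using p by (cases p) auto
  have "partial i (\<lambda>x. fcalc E T (\<lambda>z. F (complex_of_real (g x) * z))) x
      = partial i g x *\<^sub>R (T o\<^sub>L fcalc E T (\<lambda>z. deriv F (complex_of_real (g x) * z)))" if "x \<in> W" for i x
    using g q that by (intro partial_eqI has_vector_derivative_line_fcalc_dilation[OF V F l(2)]) auto
  then show ?thesis using Cp_fcalc_dilation[OF V l(2) W F] g by blast
qed

end
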